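(* Let $n\mid(q+1)$, let $r\ge1$ and $\delta\ge2$ be integers with $\delta$ even and $(r+\delta-1)\mid n$, and put $\nu=n/(r+\delta-1)$, $B=\{\alpha^{j}:-\tfrac{\delta-2}{2}\le j\le\tfrac{\delta-2}{2}\}$. Let $i\in\{0,1,\dots,\lfloor\frac{r-1}{2}\rfloor\}$. (1) For $\ell\in\{0,1,\dots,\lfloor\frac{\nu-2}{2}\rfloor\}$, let $A=\{\alpha^{j}:|j|\le \ell(r+\delta-1)+i\}\cup\{\alpha^{(\ell+e)(r+\delta-1)}:e=1,\dots,\nu-2\ell-1\}$. Then $C_{AB}$ is an optimal cyclic $(r,\delta)$-LRC over $\mathbb{F}_q$ with dimension $(\nu-2\ell)r-2i$ and minimum distance $\delta+2i+2\ell(r+\delta-1)$. (2) If $r+\delta-1$ is even, for $\ell\in\{0,1,\dots,\lfloor\frac{\nu-3}{2}\rfloor\}$ let $A=\{\alpha^{j}:|j|\le \frac{2\ell+1}{2}(r+\delta-1)+i\}\cup\{\alpha^{\frac{2\ell+1+2e}{2}(r+\delta-1)}:e=1,\dots,\nu-2\ell-2\}$. Then $C_{AB}$ is an optimal cyclic $(r,\delta)$-LRC over $\mathbb{F}_q$ with dimension $(\nu-2\ell-1)r-2i$ and minimum distance $\delta+2i+(2\ell+1)(r+\delta-1)$. (3) If $\nu$ is odd, for $\ell\in\{1,2,\dots,\frac{\nu-3}{2}\}$ let $A=\{\alpha^{j}:(\frac{\nu-1}{2}-\ell)(r+\delta-1)-i\le j\le(\frac{\nu+1}{2}+\ell)(r+\delta-1)+i\}\cup\{\alpha^{(\frac{\nu+1}{2}+\ell+e)(r+\delta-1)}:e=1,\dots,\nu-2\ell-2\}$.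 Then $C_{AB}$ is an optimal cyclic $(r,\delta)$-LRC over $\mathbb{F}_q$ with dimension $(\nu-2\ell-1)r-2i$ and minimum distance $\delta+2i+(2\ell+1)(r+\delta-1)$.
   Context: Let $q$ be a prime power and $n\mid(q+1)$, so the set $R_n$ of all $n$-th roots of unity lies in $\mathbb{F}_{q^2}$; let $\alpha\in\mathbb{F}_{q^2}$ be a primitive $n$-th root of unity; exponents of $\alpha$ are read modulo $n$. For $A,B\subseteq R_n$, $AB=\{\beta\gamma:\beta\in A,\gamma\in B\}$. For $Z\subseteq R_n$ such that $\{j:\alpha^j\in Z\}$ is closed under $j\mapsto -j\bmod n$ (equivalently a union of $q$-cyclotomic cosets modulo $n$), $C_Z$ denotes the cyclic code of length $n$ over $\mathbb{F}_q$ generated by $\prod_{\beta\in Z}(x-\beta)\in\mathbb{F}_q[x]$ in $\mathbb{F}_q[x]/(x^n-1)$ (dimension $n-|Z|$). Locality: for a linear code $C\subseteq\mathbb{F}_q^n$ and integers $r\ge1$, $\delta\ge2$, the $i$-th coordinate has $(r,\delta)$-locality if there is $S_i\subseteq\{1,\dots,n\}$ with $i\in S_i$, $|S_i|\le r+\delta-1$ such that the punctured code $C|_{S_i}$ has minimum distance at least $\delta$; $C$ is an $(r,\delta)$-LRC if every coordinate has $(r,\delta)$-locality. An $[n,k,d]$ $(r,\delta)$-LRC is optimal if $d=n-k-(\lceil k/r\rceil-1)(\delta-1)+1$ (always an upper bound on $d$). *)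

theory Defs
  imports Main "HOL-Computational_Algebra.Polynomial"
begin

text \<open>The ambient field 'a plays the role of F_{q^2} (CARD('a) = q^2);
  F_q is its subfield of elements fixed by x \<mapsto> x^q.
  Vectors of length n are functions nat \<Rightarrow> 'a, coordinates 0..n-1 (zero outside).\<close>

definition Fq :: "nat \<Rightarrow> 'a::field set" where
  "Fq q = {x. x ^ q = x}"

definition prime_power :: "nat \<Rightarrow> bool" where
  "prime_power q \<longleftrightarrow> (\<exists>p m. prime p \<and> m \<ge> 1 \<and> q = p ^ m)"

definition setmult :: "'a::times set \<Rightarrow> 'a set \<Rightarrow> 'a set" where
  "setmult A B = {b * c | b c. b \<in> A \<and> c \<in> B}"

definition gen_poly :: "'a::field set \<Rightarrow> 'a poly" where
  "gen_poly Z = (\<Prod>\<beta>\<in>Z. [:- \<beta>, 1:])"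

definition cyclic_code :: "nat \<Rightarrow> nat \<Rightarrow> 'a::field set \<Rightarrow> (nat \<Rightarrow> 'a) set" where
  "cyclic_code q n Z =
     {c. \<exists>m. (\<forall>j. coeff m j \<in> Fq q) \<and>
             c = (\<lambda>j. if j < n then coeff ((m * gen_poly Z) mod (monom 1 n - 1)) j else 0)}"

definition linear_code_Fq :: "nat \<Rightarrow> nat \<Rightarrow> (nat \<Rightarrow> 'a::field) set \<Rightarrow> bool" where
  "linear_code_Fq q n C \<longleftrightarrow>
     (\<forall>c\<in>C. \<forall>j. c j \<in> Fq q \<and> (j \<ge> n \<longrightarrow> c j = 0)) \<and>
     (\<lambda>_. 0) \<in> C \<and>
     (\<forall>c\<in>C. \<forall>c'\<in>C. (\<lambda>j. c j + c' j) \<in> C) \<and>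
     (\<forall>a\<in>Fq q. \<forall>c\<in>C. (\<lambda>j. a * c j) \<in> C)"

definition code_dim :: "nat \<Rightarrow> (nat \<Rightarrow> 'a) set \<Rightarrow> nat \<Rightarrow> bool" where
  "code_dim q C k \<longleftrightarrow> card C = q ^ k"

definition hweight :: "nat \<Rightarrow> (nat \<Rightarrow> 'a::zero) \<Rightarrow> nat" where
  "hweight n c = card {j. j < n \<and> c j \<noteq> 0}"

definition min_dist :: "nat \<Rightarrow> (nat \<Rightarrow> 'a::zero) set \<Rightarrow> nat" where
  "min_dist n C = Min (hweight n ` (C - {\<lambda>_. 0}))"

definition punctured :: "nat set \<Rightarrow> (nat \<Rightarrow> 'a::zero) set \<Rightarrow> (nat \<Rightarrow> 'a) set" where
  "punctured S C = (\<lambda>c j. if j \<in> S then c j else 0) ` C"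

definition dist_at_least :: "nat \<Rightarrow> (nat \<Rightarrow> 'a::zero) set \<Rightarrow> nat \<Rightarrow> bool" where
  "dist_at_least n C d \<longleftrightarrow> (\<forall>c\<in>C. c \<noteq> (\<lambda>_. 0) \<longrightarrow> hweight n c \<ge> d)"

definition is_LRC :: "nat \<Rightarrow> nat \<Rightarrow> nat \<Rightarrow> (nat \<Rightarrow> 'a::zero) set \<Rightarrow> bool" where
  "is_LRC n r \<delta> C \<longleftrightarrow>
     (\<forall>i<n. \<exists>S. S \<subseteq> {..<n} \<and> i \<in> S \<and> card S \<le> r + \<delta> - 1 \<and>
              dist_at_least n (punctured S C) \<delta>)"

definition optimal_LRC ::
  "nat \<Rightarrow> nat \<Rightarrow> nat \<Rightarrow> nat \<Rightarrow> (nat \<Rightarrow> 'a::field) set \<Rightarrow> nat \<Rightarrow> nat \<Rightarrow> bool" where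
  "optimal_LRC q n r \<delta> C k d \<longleftrightarrow>
     linear_code_Fq q n C \<and> code_dim q C k \<and> min_dist n C = d \<and> is_LRC n r \<delta> C \<and>
     int d = int n - int k - (\<lceil>real k / real r\<rceil> - 1) * (int \<delta> - 1) + 1"

end

theory Submission
  imports Defs "HOL-Computational_Algebra.Primes" "HOL-Algebra.Ring"
begin

text \<open>Write \<open>m = r + \<delta> - 1\<close> and \<open>n = \<nu> m\<close>. In each case the exponents of \<open>Z = AB\<close> form
  one run of consecutive integers together with blocks of \<open>\<delta> - 1\<close> consecutive integers centred
  at \<open>c + e m\<close>; the run swallows the missing blocks, so \<open>Z\<close> contains \<open>\<nu>\<close> such blocks spaced
  \<open>m\<close> apart. Grouping the coordinates by their residue modulo \<open>\<nu>\<close>, a Vandermonde argument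
  turns these blocks into \<open>\<delta> - 1\<close> consecutive zeros for each group, and the BCH bound makes
  every group of \<open>m\<close> coordinates a repair group of distance \<open>\<delta>\<close>. The run gives, again by
  the BCH bound, the lower bound on the minimum distance. Since \<open>n\<close> divides \<open>q + 1\<close>, the
  Frobenius inverts the \<open>n\<close>-th roots of unity, so the inverse-closed set \<open>Z\<close> defines a code
  over \<open>F\<^sub>q\<close> of dimension \<open>n - |Z|\<close>. Conversely, counting gives a nonzero codeword that
  vanishes on \<open>r\<close> coordinates of each of the first few groups and on a few more; by locality
  it vanishes on those groups entirely, and its weight meets the Singleton-like bound.\<close>

section \<open>Finite fields, power sums and generator polynomials\<close>

lemma CHAR_dvd_card_UNIV: "CHAR('a::{ring_1,finite}) dvd card (UNIV :: 'a set)"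
proof -
  have "(\<Sum>x\<in>(UNIV :: 'a set). x + 1) = (\<Sum>x\<in>(UNIV :: 'a set). x)"
    by (rule sum.reindex_bij_witness[of _ "\<lambda>x. x - 1" "\<lambda>x. x + 1"]) auto
  hence "of_nat (card (UNIV :: 'a set)) = (0 :: 'a)"
    by (simp add: sum.distrib)
  thus ?thesis
    by (simp add: of_nat_eq_0_iff_char_dvd)
qed

text \<open>The library proves this for the class \<open>finite_field\<close> only; for the sort
  \<open>{field, finite}\<close> it follows from Lagrange's theorem in the unit group.\<close>

lemma finite_field_power_card_eq_self:
  fixes x :: "'a::{field,finite}"
  shows "x ^ card (UNIV :: 'a set) = x"
proof (cases "x = 0")
  case False
  define R :: "'a ring" where "R = \<lparr>carrier = UNIV, monoid.mult = (*), one = 1, zero = 0, add = (+)\<rparr>"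
  interpret cring R
    unfolding R_def by unfold_locales (auto simp: algebra_simps Units_def intro: exI[of _ "- _"])
  have units: "Units R = UNIV - {0}"
    unfolding R_def Units_def by auto (metis left_inverse right_inverse)
  have pow: "y [^]\<^bsub>R\<^esub> k = y ^ k" for y :: 'a and k
    by (induction k) (simp_all add: R_def)
  define k where "k = card (UNIV - {0 :: 'a})"
  have "x ^ k = 1"
    using units_power_order_eq_one[of x] False by (simp add: k_def units pow) (simp add: R_def)
  moreover have "card (UNIV :: 'a set) = Suc k"
    using card_Suc_Diff1[of UNIV "0 :: 'a"] by (simp add: k_def)
  ultimately show ?thesis
    by simp
qed (simp add: card_gt_0_iff)

lemma vandermonde_sums_eq_0_imp_eq_0:
  fixes x y :: "'b \<Rightarrow> 'a::field"
  assumes T: "finite T" and inj: "inj_on x T"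
    and sums: "\<And>t. t < card T \<Longrightarrow> (\<Sum>s\<in>T. y s * x s ^ t) = 0"
    and s0: "s0 \<in> T"
  shows "y s0 = 0"
proof -
  define p where "p = (\<Prod>s\<in>T - {s0}. [:- x s, 1:])"
  have "card T > 0"
    using T s0 by (auto simp: card_gt_0_iff)
  hence degree_p: "degree p < card T"
    unfolding p_def using T s0 by (subst degree_prod_eq_sum_degree) auto
  have "y s0 * poly p (x s0) = (\<Sum>s\<in>T. y s * poly p (x s))"
    using T s0 by (intro sum.remove[of T s0, THEN trans, symmetric])
      (auto simp: p_def poly_prod intro!: sum.neutral)
  also have "\<dots> = (\<Sum>i\<le>degree p. coeff p i * (\<Sum>s\<in>T. y s * x s ^ i))"
    by (simp add: poly_altdef sum_distrib_left sum_distrib_right mult_ac sum.swap[of _ T])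
  also have "\<dots> = 0"
    using degree_p sums by (intro sum.neutral) auto
  finally have "y s0 * poly p (x s0) = 0" .
  moreover have "poly p (x s0) \<noteq> 0"
    using T inj s0 by (auto simp: p_def poly_prod prod_zero_iff inj_on_def)
  ultimately show ?thesis
    by simp
qed

lemma bch_bound:
  fixes x y :: "nat \<Rightarrow> 'a::field"
  assumes inj: "inj_on x {..<N}"
    and sums: "\<And>t. t < D - 1 \<Longrightarrow> (\<Sum>s<N. y s * x s ^ t) = 0"
    and nonzero: "\<exists>s<N. y s \<noteq> 0"
  shows "D \<le> card {s. s < N \<and> y s \<noteq> 0}"
proof (rule ccontr)
  define T where "T = {s. s < N \<and> y s \<noteq> 0}"
  assume "\<not> D \<le> card {s. s < N \<and> y s \<noteq> 0}"
  hence card_T: "card T < D"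
    by (simp add: T_def)
  obtain s0 where s0: "s0 \<in> T"
    using nonzero by (auto simp: T_def)
  have "y s0 = 0"
  proof (rule vandermonde_sums_eq_0_imp_eq_0[OF _ _ _ s0])
    show "finite T"
      by (simp add: T_def)
    show "inj_on x T"
      by (rule inj_on_subset[OF inj]) (auto simp: T_def)
    fix t assume "t < card T"
    hence "(\<Sum>s<N. y s * x s ^ t) = 0"
      using card_T by (intro sums) linarith
    moreover have "(\<Sum>s<N. y s * x s ^ t) = (\<Sum>s\<in>T. y s * x s ^ t)"
      by (rule sum.mono_neutral_right) (auto simp: T_def)
    ultimately show "(\<Sum>s\<in>T. y s * x s ^ t) = 0"
      by simp
  qed
  thus False
    using s0 by (simp add: T_def)
qed

lemma poly_eq_sum_lessThan:
  fixes R :: "'a::comm_semiring_1 poly"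
  assumes "degree R < N"
  shows "poly R x = (\<Sum>j<N. coeff R j * x ^ j)"
proof -
  have "poly R x = (\<Sum>j\<le>degree R. coeff R j * x ^ j)"
    by (rule poly_altdef)
  also have "\<dots> = (\<Sum>j<N. coeff R j * x ^ j)"
    using assms by (intro sum.mono_neutral_left) (auto simp: coeff_eq_0)
  finally show ?thesis .
qed

lemma sum_lessThan_mult_residue_classes:
  fixes f :: "nat \<Rightarrow> 'a::comm_monoid_add"
  shows "(\<Sum>j<\<nu> * \<mu>. f j) = (\<Sum>a<\<nu>. \<Sum>s<\<mu>. f (a + \<nu> * s))"
proof -
  have "(\<Sum>j<\<mu> * \<nu>. f j) = (\<Sum>s<\<mu>. \<Sum>j\<in>{s * \<nu>..<s * \<nu> + \<nu>}. f j)"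
    by (rule sum.nat_group[symmetric])
  also have "\<dots> = (\<Sum>s<\<mu>. \<Sum>a<\<nu>. f (a + \<nu> * s))"
    using sum.shift_bounds_nat_ivl[of f 0 "s * \<nu>" \<nu> for s]
    by (simp add: atLeast0LessThan add.commute mult.commute)
  finally show ?thesis
    by (simp add: mult.commute sum.swap[of _ "{..<\<mu>}"])
qed

lemma ceiling_divide_eq:
  fixes k r :: nat and a s :: int
  assumes k: "int k = a * int r - s" and s: "0 \<le> s" "s < int r"
  shows "\<lceil>real k / real r\<rceil> = a"
proof -
  have "real k / real r = real_of_int a - real_of_int s / real r"
    using arg_cong[OF k, of real_of_int] s by (simp add: field_simps)
  moreover have "0 \<le> real_of_int s / real r" "real_of_int s / real r < 1"
    using s by (simp_all add: divide_less_eq)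
  ultimately show ?thesis
    by (intro ceiling_unique) auto
qed

lemma degree_gen_poly: "finite Z \<Longrightarrow> degree (gen_poly Z) = card Z"
  unfolding gen_poly_def by (subst degree_prod_eq_sum_degree) auto

lemma gen_poly_nonzero: "gen_poly Z \<noteq> 0"
proof -
  have "lead_coeff (gen_poly Z) = 1"
    unfolding gen_poly_def by (simp add: lead_coeff_prod)
  thus ?thesis
    by auto
qed

lemma poly_gen_poly_eq_0: "finite Z \<Longrightarrow> b \<in> Z \<Longrightarrow> poly (gen_poly Z) b = 0"
  unfolding gen_poly_def poly_prod by (rule prod_zero) auto

section \<open>The subfield \<open>F\<^sub>q\<close> and polynomials over it\<close>

locale Fq2_roots_of_unity =
  fixes q n :: nat and \<alpha> :: "'a::{field,finite}"
  assumes prime_power_q: "prime_power q"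
    and card_UNIV: "card (UNIV :: 'a set) = q ^ 2"
    and n_dvd: "n dvd q + 1"
    and alpha_power_n: "\<alpha> ^ n = 1"
    and alpha_primitive: "\<forall>k. 0 < k \<and> k < n \<longrightarrow> \<alpha> ^ k \<noteq> 1"
begin

lemma prime_CHAR: "prime CHAR('a)"
proof -
  have "CHAR('a) > 0"
    by (simp add: finite_imp_CHAR_pos)
  thus ?thesis
    using prime_CHAR_semidom by blast
qed

lemma q_eq_CHAR_power: obtains k where "q = CHAR('a) ^ k"
proof -
  obtain p a where pa: "prime p" "q = p ^ a"
    using prime_power_q unfolding prime_power_def by blast
  have "CHAR('a) dvd card (UNIV :: 'a set)"
    by (rule CHAR_dvd_card_UNIV)
  hence "CHAR('a) dvd p ^ (a * 2)"
    using card_UNIV pa(2) by (simp add: power_mult)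
  hence "CHAR('a) = p"
    using prime_CHAR pa(1) prime_dvd_power primes_dvd_imp_eq by blast
  thus ?thesis
    using pa that by blast
qed

lemma q_ge_2: "q \<ge> 2"
proof -
  obtain p a where "prime p" "a \<ge> 1" "q = p ^ a"
    using prime_power_q unfolding prime_power_def by blast
  thus ?thesis
    using prime_ge_2_nat[of p] power_increasing[of 1 a p] by simp
qed

lemma power_q_add: "(x + y :: 'a) ^ q = x ^ q + y ^ q"
proof -
  obtain k where "q = CHAR('a) ^ k"
    by (rule q_eq_CHAR_power)
  thus ?thesis
    by (rule freshmans_dream'[OF prime_CHAR])
qed

lemma power_q_sum: "(sum f A :: 'a) ^ q = (\<Sum>i\<in>A. f i ^ q)"
proof -
  obtain k where "q = CHAR('a) ^ k"
    by (rule q_eq_CHAR_power)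
  thus ?thesis
    by (rule freshmans_dream_sum'[OF prime_CHAR])
qed

lemma power_q_minus: "(- x :: 'a) ^ q = - (x ^ q)"
proof -
  have "x ^ q + (- x) ^ q = 0"
    using power_q_add[of x "- x"] q_ge_2 by (simp add: power_0_left)
  thus ?thesis
    by (simp add: eq_neg_iff_add_eq_0 add.commute)
qed

lemma power_q_diff: "(x - y :: 'a) ^ q = x ^ q - y ^ q"
  using power_q_add[of x "- y"] power_q_minus[of y] by simp

lemma power_q_power_q: "((x :: 'a) ^ q) ^ q = x"
  using finite_field_power_card_eq_self[of x] card_UNIV by (simp add: power2_eq_square flip: power_mult)

lemma inj_power_q: "inj (\<lambda>x :: 'a. x ^ q)"
  by (metis injI power_q_power_q)

lemma Fq_0: "0 \<in> (Fq q :: 'a set)"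
  using q_ge_2 by (simp add: Fq_def)

lemma Fq_1: "1 \<in> (Fq q :: 'a set)"
  by (simp add: Fq_def)

lemma Fq_add: "x \<in> Fq q \<Longrightarrow> y \<in> Fq q \<Longrightarrow> (x + y :: 'a) \<in> Fq q"
  by (simp add: Fq_def power_q_add)

lemma Fq_minus: "x \<in> Fq q \<Longrightarrow> (- x :: 'a) \<in> Fq q"
  by (simp add: Fq_def power_q_minus)

lemma Fq_mult: "x \<in> Fq q \<Longrightarrow> y \<in> Fq q \<Longrightarrow> (x * y :: 'a) \<in> Fq q"
  by (simp add: Fq_def power_mult_distrib)

lemma Fq_sum: "(\<And>i. i \<in> A \<Longrightarrow> f i \<in> Fq q) \<Longrightarrow> (sum f A :: 'a) \<in> Fq q"
  by (simp add: Fq_def power_q_sum)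

lemma card_Fq_le: "card (Fq q :: 'a set) \<le> q"
proof -
  let ?p = "monom (1 :: 'a) q + [:0, - 1:]"
  have degree: "degree ?p = q"
    using q_ge_2 by (simp add: degree_add_eq_left degree_monom_eq)
  hence "?p \<noteq> 0"
    using q_ge_2 by auto
  moreover have "Fq q = {x :: 'a. poly ?p x = 0}"
    by (auto simp: Fq_def poly_monom)
  ultimately show ?thesis
    using card_poly_roots_bound[of ?p] degree by simp
qed

text \<open>The map \<open>x \<mapsto> x^q - x\<close> is additive with kernel \<open>F\<^sub>q\<close>, so its fibres are the
  cosets of \<open>F\<^sub>q\<close>; its values \<open>y\<close> satisfy \<open>y^q + y = 0\<close>, so there are at most \<open>q\<close> of them.\<close>

lemma card_UNIV_eq_card_range_times_card_Fq:
  "card (UNIV :: 'a set) = card (range (\<lambda>x :: 'a. x ^ q - x)) * card (Fq q :: 'a set)"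
proof -
  define f where "f x = x ^ q - x" for x :: 'a
  have "f -` {f x0} = (\<lambda>z. x0 + z) ` Fq q" for x0
  proof (intro equalityI subsetI)
    fix x assume "x \<in> f -` {f x0}"
    hence "(x - x0) ^ q = x - x0"
      by (simp add: f_def power_q_diff algebra_simps)
    thus "x \<in> (\<lambda>z. x0 + z) ` Fq q"
      by (intro image_eqI[of _ _ "x - x0"]) (auto simp: Fq_def)
  qed (auto simp: f_def Fq_def power_q_add)
  hence fibre: "card (f -` {y}) = card (Fq q :: 'a set)" if "y \<in> range f" for y
    using that by (auto simp: card_image)
  have "card (UNIV :: 'a set) = card (\<Union>y\<in>range f. f -` {y})"
    by (intro arg_cong[where f = card]) auto
  also have "\<dots> = (\<Sum>y\<in>range f. card (f -` {y}))"
    by (rule card_UN_disjoint) auto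
  also have "\<dots> = card (range f) * card (Fq q :: 'a set)"
    using fibre by (simp add: card_image)
  finally show ?thesis
    by (simp add: f_def)
qed

lemma card_range_power_q_minus_le: "card (range (\<lambda>x :: 'a. x ^ q - x)) \<le> q"
proof -
  let ?p = "monom (1 :: 'a) q + [:0, 1:]"
  have degree: "degree ?p = q"
    using q_ge_2 by (simp add: degree_add_eq_left degree_monom_eq)
  hence nonzero: "?p \<noteq> 0"
    using q_ge_2 by auto
  have "range (\<lambda>x :: 'a. x ^ q - x) \<subseteq> {y. poly ?p y = 0}"
    by (auto simp: poly_monom power_q_diff power_q_power_q)
  hence "card (range (\<lambda>x :: 'a. x ^ q - x)) \<le> card {y. poly ?p y = 0}"
    by (intro card_mono poly_roots_finite nonzero)
  also have "\<dots> \<le> q"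
    using card_poly_roots_bound[OF nonzero] degree by simp
  finally show ?thesis .
qed

lemma card_Fq: "card (Fq q :: 'a set) = q"
proof -
  have "q * q = card (UNIV :: 'a set)"
    using card_UNIV by (simp only: power2_eq_square)
  also have "\<dots> = card (range (\<lambda>x :: 'a. x ^ q - x)) * card (Fq q :: 'a set)"
    by (rule card_UNIV_eq_card_range_times_card_Fq)
  also have "\<dots> \<le> q * card (Fq q :: 'a set)"
    using card_range_power_q_minus_le by (rule mult_le_mono1)
  finally have "q * q \<le> q * card (Fq q :: 'a set)" .
  thus ?thesis
    using card_Fq_le q_ge_2 by simp
qed

definition Fq_poly :: "'a poly \<Rightarrow> bool" where
  "Fq_poly p \<longleftrightarrow> (\<forall>j. coeff p j \<in> Fq q)"

definition frobenius_poly :: "'a poly \<Rightarrow> 'a poly" where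
  "frobenius_poly p = map_poly (\<lambda>x. x ^ q) p"

lemma coeff_frobenius_poly: "coeff (frobenius_poly p) j = coeff p j ^ q"
  using q_ge_2 by (simp add: frobenius_poly_def coeff_map_poly)

lemma Fq_poly_iff_frobenius_fixed: "Fq_poly p \<longleftrightarrow> frobenius_poly p = p"
  by (simp add: Fq_poly_def Fq_def poly_eq_iff coeff_frobenius_poly)

lemma frobenius_poly_add: "frobenius_poly (p + p') = frobenius_poly p + frobenius_poly p'"
  by (rule poly_eqI) (simp add: coeff_frobenius_poly power_q_add)

lemma frobenius_poly_mult: "frobenius_poly (p * p') = frobenius_poly p * frobenius_poly p'"
  by (rule poly_eqI) (simp add: coeff_frobenius_poly coeff_mult power_q_sum power_mult_distrib)

lemma frobenius_poly_1: "frobenius_poly 1 = 1"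
  by (simp add: frobenius_poly_def)

lemma frobenius_poly_prod: "frobenius_poly (prod f A) = (\<Prod>i\<in>A. frobenius_poly (f i))"
  by (induction A rule: infinite_finite_induct) (simp_all add: frobenius_poly_1 frobenius_poly_mult)

lemma frobenius_poly_linear: "frobenius_poly [:- b, 1:] = [:- (b ^ q), 1:]"
  using q_ge_2
  by (auto simp: poly_eq_iff coeff_frobenius_poly coeff_pCons power_q_minus split: nat.splits)

lemma degree_frobenius_poly: "degree (frobenius_poly p) = degree p"
  unfolding frobenius_poly_def using q_ge_2 by (intro degree_map_poly) simp

lemma Fq_poly_0: "Fq_poly 0"
  by (simp add: Fq_poly_def Fq_0)

lemma Fq_poly_add: "Fq_poly p \<Longrightarrow> Fq_poly p' \<Longrightarrow> Fq_poly (p + p')"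
  by (simp add: Fq_poly_def Fq_add)

lemma Fq_poly_smult: "c \<in> Fq q \<Longrightarrow> Fq_poly p \<Longrightarrow> Fq_poly (smult c p)"
  by (simp add: Fq_poly_def Fq_mult)

lemma Fq_poly_monom: "c \<in> Fq q \<Longrightarrow> Fq_poly (monom c k)"
  by (simp add: Fq_poly_def Fq_0)

lemma Fq_poly_sum: "(\<And>i. i \<in> A \<Longrightarrow> Fq_poly (f i)) \<Longrightarrow> Fq_poly (sum f A)"
  by (simp add: Fq_poly_def coeff_sum Fq_sum)

lemma Fq_poly_mult: "Fq_poly p \<Longrightarrow> Fq_poly p' \<Longrightarrow> Fq_poly (p * p')"
  by (simp add: Fq_poly_iff_frobenius_fixed frobenius_poly_mult)

text \<open>Applying the Frobenius to \<open>P = (P div Q) * Q + P mod Q\<close> gives a second division of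
  \<open>P\<close> by \<open>Q\<close>, with the remainder \<open>frobenius_poly (P mod Q)\<close>; uniqueness of the remainder does
  the rest.\<close>

lemma Fq_poly_mod:
  assumes P: "Fq_poly P" and Q: "Fq_poly Q"
  shows "Fq_poly (P mod Q)"
proof (cases "Q = 0 \<or> P mod Q = 0")
  case True
  thus ?thesis
    using P Fq_poly_0 by auto
next
  case False
  define R where "R = frobenius_poly (P mod Q)"
  have "degree R < degree Q"
    using False degree_mod_less[of Q P] by (simp add: R_def degree_frobenius_poly)
  have "frobenius_poly P = frobenius_poly (P div Q) * frobenius_poly Q + R"
    unfolding R_def by (metis div_mult_mod_eq frobenius_poly_add frobenius_poly_mult)
  hence "P mod Q = (R + frobenius_poly (P div Q) * Q) mod Q"
    using P Q by (simp add: Fq_poly_iff_frobenius_fixed add.commute)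
  also have "\<dots> = R"
    using \<open>degree R < degree Q\<close> by (simp add: mod_poly_less)
  finally show ?thesis
    by (simp add: Fq_poly_iff_frobenius_fixed R_def)
qed

lemma Fq_poly_gen_poly:
  assumes Z: "finite Z" "\<And>b. b \<in> Z \<Longrightarrow> b ^ q \<in> Z"
  shows "Fq_poly (gen_poly Z)"
proof -
  have inj: "inj_on (\<lambda>x. x ^ q) Z"
    using inj_power_q by (rule inj_on_subset) simp
  have image: "(\<lambda>x. x ^ q) ` Z = Z"
    using Z by (intro card_subset_eq) (auto simp: card_image[OF inj])
  have "frobenius_poly (gen_poly Z) = (\<Prod>b\<in>Z. [:- (b ^ q), 1:])"
    by (simp add: gen_poly_def frobenius_poly_prod frobenius_poly_linear)
  also have "\<dots> = (\<Prod>b\<in>(\<lambda>x. x ^ q) ` Z. [:- b, 1:])"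
    by (simp add: prod.reindex[OF inj])
  also have "\<dots> = gen_poly Z"
    by (simp add: image gen_poly_def)
  finally show ?thesis
    by (simp add: Fq_poly_iff_frobenius_fixed)
qed

section \<open>Roots of unity of order dividing \<open>q + 1\<close>\<close>

lemma n_pos: "n > 0"
  using n_dvd by (intro Nat.gr0I) simp

lemma alpha_nonzero: "\<alpha> \<noteq> 0"
  using alpha_power_n n_pos by (auto simp: power_0_left)

lemma alpha_powi_add: "\<alpha> powi (a + b) = \<alpha> powi a * \<alpha> powi b"
  using alpha_nonzero by (simp add: power_int_add)

lemma alpha_powi_power: "(\<alpha> powi j) ^ k = \<alpha> powi (j * int k)"
  by (simp add: power_int_mult)

lemma alpha_powi_n_mult: "\<alpha> powi (int n * k) = 1"
  by (simp add: power_int_mult alpha_power_n)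

lemma alpha_powi_mod: "\<alpha> powi (j mod int n) = \<alpha> powi j"
  using alpha_powi_add[of "j mod int n" "int n * (j div int n)"] by (simp add: alpha_powi_n_mult)

lemma alpha_powi_eq_iff: "\<alpha> powi a = \<alpha> powi b \<longleftrightarrow> a mod int n = b mod int n"
proof
  assume eq: "\<alpha> powi a = \<alpha> powi b"
  define d where "d = nat ((a - b) mod int n)"
  have "\<alpha> powi (a - b) = 1"
    using eq alpha_powi_add[of a "- b"] alpha_nonzero by (simp add: power_int_minus)
  hence "\<alpha> ^ d = 1" "d < n"
    using alpha_powi_mod[of "a - b"] n_pos by (simp_all add: d_def nat_less_iff power_int_def)
  hence "d = 0"
    using alpha_primitive by auto
  hence "(a - b) mod int n = 0"
    using n_pos pos_mod_sign[of "int n" "a - b"] unfolding d_def by linarith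
  hence "int n dvd a - b"
    by (simp only: dvd_eq_mod_eq_0)
  thus "a mod int n = b mod int n"
    by (simp only: mod_eq_dvd_iff)
next
  assume "a mod int n = b mod int n"
  thus "\<alpha> powi a = \<alpha> powi b"
    by (metis alpha_powi_mod)
qed

lemma inj_on_alpha_power: "inj_on (\<lambda>j. \<alpha> ^ j) {..<n}"
proof (rule inj_onI)
  fix a b assume "a \<in> {..<n}" "b \<in> {..<n}" "\<alpha> ^ a = \<alpha> ^ b"
  thus "a = b"
    using alpha_powi_eq_iff[of "int a" "int b"] by simp
qed

lemma alpha_powi_power_q: "(\<alpha> powi j) ^ q = \<alpha> powi (- j)"
proof -
  have "int n dvd int (q + 1)"
    using n_dvd by (simp only: int_dvd_int_iff)
  hence "int n dvd j * (int q + 1)"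
    by (simp add: add.commute)
  hence "(j * int q) mod int n = (- j) mod int n"
    by (simp add: mod_eq_dvd_iff algebra_simps)
  thus ?thesis
    by (simp add: alpha_powi_power alpha_powi_eq_iff)
qed

definition roots :: "'a set" where
  "roots = (\<lambda>j. \<alpha> ^ j) ` {..<n}"

lemma roots_eq_range: "roots = range (\<lambda>j. \<alpha> powi j)"
proof (intro equalityI subsetI)
  fix x assume "x \<in> range (\<lambda>j. \<alpha> powi j)"
  then obtain j where "x = \<alpha> powi j"
    by blast
  hence "x = \<alpha> ^ nat (j mod int n)"
    using alpha_powi_mod[of j] n_pos by (simp add: power_int_def)
  thus "x \<in> roots"
    using n_pos by (auto simp: roots_def nat_less_iff)
qed (auto simp: roots_def intro: range_eqI[of _ _ "int _"])

lemma finite_roots: "finite roots"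
  by (simp add: roots_def)

lemma card_roots: "card roots = n"
  using inj_on_alpha_power by (simp add: roots_def card_image)

lemma roots_power_q: "x \<in> roots \<Longrightarrow> x ^ q = inverse x"
  using alpha_powi_power_q by (auto simp: roots_eq_range power_int_minus)

lemma inverse_in_roots: "x \<in> roots \<Longrightarrow> inverse x \<in> roots"
  by (auto simp: roots_eq_range simp flip: power_int_minus)

lemma roots_power_n: "x \<in> roots \<Longrightarrow> x ^ n = 1"
  using alpha_powi_n_mult by (auto simp: roots_eq_range alpha_powi_power mult.commute)

lemma monom_n_minus_1_eq_gen_poly: "monom 1 n - 1 = gen_poly roots"
proof (rule poly_eqI_degree_lead_coeff[where n = n and A = roots])
  show "degree (monom 1 n - 1 :: 'a poly) \<le> n"
    by (rule degree_diff_le) (auto simp: degree_monom_le)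
  show "degree (gen_poly roots) \<le> n" "n \<le> card roots"
    by (simp_all add: degree_gen_poly finite_roots card_roots)
  show "coeff (monom 1 n - 1) n = coeff (gen_poly roots) n"
    using n_pos degree_gen_poly[OF finite_roots] lead_coeff_prod[of "\<lambda>b. [:- b, 1:]" roots]
    by (simp add: card_roots gen_poly_def)
  show "poly (monom 1 n - 1) z = poly (gen_poly roots) z" if "z \<in> roots" for z
    using that poly_gen_poly_eq_0[OF finite_roots] roots_power_n by (simp add: poly_monom)
qed

definition coeff_vector :: "'a poly \<Rightarrow> nat \<Rightarrow> 'a" where
  "coeff_vector R = (\<lambda>j. if j < n then coeff R j else 0)"

end

section \<open>Cyclic codes with inverse-closed zeros\<close>

locale Fq2_cyclic_code = Fq2_roots_of_unity +
  fixes Z :: "'a set"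
  assumes Z_subset_roots: "Z \<subseteq> roots"
    and inverse_in_Z: "\<And>b. b \<in> Z \<Longrightarrow> inverse b \<in> Z"
begin

lemma finite_Z: "finite Z"
  using Z_subset_roots finite_roots by (rule finite_subset)

lemma card_Z_le: "card Z \<le> n"
  using card_mono[OF finite_roots Z_subset_roots] card_roots by simp

lemma Fq_poly_gen_poly_Z: "Fq_poly (gen_poly Z)"
  using finite_Z Z_subset_roots inverse_in_Z roots_power_q by (intro Fq_poly_gen_poly) auto

lemma Fq_poly_gen_poly_nonzeros: "Fq_poly (gen_poly (roots - Z))"
proof (rule Fq_poly_gen_poly)
  show "finite (roots - Z)"
    using finite_roots by simp
  fix b assume b: "b \<in> roots - Z"
  hence "inverse b \<notin> Z"
    using inverse_in_Z[of "inverse b"] by auto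
  thus "b ^ q \<in> roots - Z"
    using b roots_power_q inverse_in_roots by simp
qed

lemma Fq_poly_monom_n_minus_1: "Fq_poly (monom 1 n - 1)"
  unfolding monom_n_minus_1_eq_gen_poly using finite_roots inverse_in_roots roots_power_q
  by (intro Fq_poly_gen_poly) auto

lemma gen_poly_nonzeros_mult: "gen_poly (roots - Z) * gen_poly Z = monom 1 n - 1"
  unfolding monom_n_minus_1_eq_gen_poly gen_poly_def
  using Z_subset_roots finite_roots by (rule prod.subset_diff[symmetric])

lemma degree_monom_n_minus_1: "degree (monom 1 n - 1 :: 'a poly) = n"
  by (simp add: monom_n_minus_1_eq_gen_poly degree_gen_poly finite_roots card_roots)

lemma degree_mod_monom_n_minus_1: "degree (R mod (monom 1 n - 1 :: 'a poly)) < n"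
proof -
  have "monom 1 n - 1 \<noteq> (0 :: 'a poly)"
    using degree_monom_n_minus_1 n_pos by auto
  thus ?thesis
    using degree_mod_less[of "monom 1 n - 1" R] degree_monom_n_minus_1 n_pos by auto
qed

lemma cyclic_code_altdef:
  "cyclic_code q n Z = {coeff_vector (m * gen_poly Z mod (monom 1 n - 1)) | m. Fq_poly m}"
  by (auto simp: cyclic_code_def Fq_poly_def coeff_vector_def)

lemma codeword_in_Fq: "c \<in> cyclic_code q n Z \<Longrightarrow> c j \<in> Fq q"
  using Fq_poly_mod[OF Fq_poly_mult[OF _ Fq_poly_gen_poly_Z] Fq_poly_monom_n_minus_1]
  by (auto simp: cyclic_code_altdef coeff_vector_def Fq_poly_def Fq_0)

lemma codeword_beyond_n: "c \<in> cyclic_code q n Z \<Longrightarrow> n \<le> j \<Longrightarrow> c j = 0"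
  by (auto simp: cyclic_code_altdef coeff_vector_def)

lemma linear_code_Fq_cyclic_code: "linear_code_Fq q n (cyclic_code q n Z)"
  unfolding linear_code_Fq_def
proof (intro conjI ballI allI impI)
  fix c c' a j
  assume c: "c \<in> cyclic_code q n Z"
  show "c j \<in> Fq q" "n \<le> j \<Longrightarrow> c j = 0"
    using c by (simp_all add: codeword_in_Fq codeword_beyond_n)
  obtain p where p: "Fq_poly p" "c = coeff_vector (p * gen_poly Z mod (monom 1 n - 1))"
    using c by (auto simp: cyclic_code_altdef)
  show "(\<lambda>j. a * c j) \<in> cyclic_code q n Z" if "a \<in> Fq q"
    unfolding cyclic_code_altdef using that p
    by (intro CollectI exI[of _ "smult a p"])
      (simp add: Fq_poly_smult coeff_vector_def fun_eq_iff mod_smult_left)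
  assume "c' \<in> cyclic_code q n Z"
  then obtain p' where p': "Fq_poly p'" "c' = coeff_vector (p' * gen_poly Z mod (monom 1 n - 1))"
    by (auto simp: cyclic_code_altdef)
  show "(\<lambda>j. c j + c' j) \<in> cyclic_code q n Z"
    unfolding cyclic_code_altdef using p p'
    by (intro CollectI exI[of _ "p + p'"])
      (simp add: Fq_poly_add coeff_vector_def fun_eq_iff distrib_right poly_mod_add_left)
next
  show "(\<lambda>_. 0) \<in> cyclic_code q n Z"
    unfolding cyclic_code_altdef
    by (intro CollectI exI[of _ 0]) (simp add: Fq_poly_0 coeff_vector_def fun_eq_iff)
qed

lemma codeword_add:
  "c \<in> cyclic_code q n Z \<Longrightarrow> c' \<in> cyclic_code q n Z \<Longrightarrow> (\<lambda>j. c j + c' j) \<in> cyclic_code q n Z"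
  using linear_code_Fq_cyclic_code unfolding linear_code_Fq_def by blast

lemma codeword_smult:
  "a \<in> Fq q \<Longrightarrow> c \<in> cyclic_code q n Z \<Longrightarrow> (\<lambda>j. a * c j) \<in> cyclic_code q n Z"
  using linear_code_Fq_cyclic_code unfolding linear_code_Fq_def by blast

definition message_polys :: "'a poly set" where
  "message_polys = {p. Fq_poly p \<and> (\<forall>j \<ge> n - card Z. coeff p j = 0)}"

lemma card_message_polys: "card message_polys = q ^ (n - card Z)"
proof -
  let ?k = "n - card Z"
  have "bij_betw (\<lambda>p. restrict (coeff p) {..<?k}) message_polys (\<Pi>\<^sub>E j\<in>{..<?k}. Fq q)"
  proof (rule bij_betwI[where g = "\<lambda>f. \<Sum>j<?k. monom (f j) j"])
    show "(\<lambda>p. restrict (coeff p) {..<?k}) \<in> message_polys \<rightarrow> (\<Pi>\<^sub>E j\<in>{..<?k}. Fq q)"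
      by (auto simp: message_polys_def Fq_poly_def)
    show "(\<lambda>f. \<Sum>j<?k. monom (f j) j) \<in> (\<Pi>\<^sub>E j\<in>{..<?k}. Fq q) \<rightarrow> message_polys"
    proof
      fix f :: "nat \<Rightarrow> 'a" assume "f \<in> (\<Pi>\<^sub>E j\<in>{..<?k}. Fq q)"
      hence "Fq_poly (\<Sum>j<?k. monom (f j) j)"
        by (intro Fq_poly_sum Fq_poly_monom) auto
      thus "(\<Sum>j<?k. monom (f j) j) \<in> message_polys"
        by (simp add: message_polys_def coeff_sum)
    qed
    show "(\<Sum>j<?k. monom (restrict (coeff p) {..<?k} j) j) = p" if "p \<in> message_polys" for p
      using that by (intro poly_eqI) (auto simp: message_polys_def coeff_sum)
    show "restrict (coeff (\<Sum>j<?k. monom (f j) j)) {..<?k} = f"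
      if "f \<in> (\<Pi>\<^sub>E j\<in>{..<?k}. Fq q)" for f
      using that by (auto simp: coeff_sum PiE_def extensional_def fun_eq_iff)
  qed
  hence "card message_polys = card (\<Pi>\<^sub>E j\<in>{..<?k}. (Fq q :: 'a set))"
    by (rule bij_betw_same_card)
  thus ?thesis
    by (simp add: card_PiE card_Fq)
qed

lemma degree_message_mult_gen_poly:
  assumes "p \<in> message_polys"
  shows "degree (p * gen_poly Z) < n"
proof (cases "p = 0")
  case False
  hence "coeff p (degree p) \<noteq> 0"
    by simp
  hence "degree p < n - card Z"
    using assms by (auto simp: message_polys_def not_less[symmetric])
  thus ?thesis
    using degree_mult_eq[OF False gen_poly_nonzero] degree_gen_poly[OF finite_Z] card_Z_le by simp
qed (simp add: n_pos)

lemma message_mult_gen_poly_mod: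
  "p \<in> message_polys \<Longrightarrow> p * gen_poly Z mod (monom 1 n - 1) = p * gen_poly Z"
  using degree_message_mult_gen_poly degree_monom_n_minus_1 by (simp add: mod_poly_less)

text \<open>Since \<open>gen_poly (roots - Z) * gen_poly Z = X^n - 1\<close>, reducing a message modulo
  \<open>gen_poly (roots - Z)\<close> does not change its codeword.\<close>

lemma cyclic_code_eq_image_message_polys:
  "cyclic_code q n Z = (\<lambda>p. coeff_vector (p * gen_poly Z)) ` message_polys"
proof (intro equalityI subsetI)
  fix c assume "c \<in> cyclic_code q n Z"
  then obtain p where p: "Fq_poly p" "c = coeff_vector (p * gen_poly Z mod (monom 1 n - 1))"
    by (auto simp: cyclic_code_altdef)
  let ?h = "gen_poly (roots - Z)"
  have "degree ?h = n - card Z"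
    using finite_roots card_Diff_subset[OF finite_Z Z_subset_roots]
    by (simp add: degree_gen_poly card_roots)
  hence "coeff (p mod ?h) j = 0" if "n - card Z \<le> j" for j
    using that degree_mod_less[OF gen_poly_nonzero, of p "roots - Z"] by (auto simp: coeff_eq_0)
  hence "p mod ?h \<in> message_polys"
    using Fq_poly_mod[OF p(1) Fq_poly_gen_poly_nonzeros] by (simp add: message_polys_def)
  moreover have "p * gen_poly Z = (p mod ?h) * gen_poly Z + (p div ?h) * (monom 1 n - 1)"
  proof -
    have "p * gen_poly Z = ((p div ?h) * ?h + p mod ?h) * gen_poly Z"
      by (simp only: div_mult_mod_eq)
    also have "\<dots> = (p mod ?h) * gen_poly Z + (p div ?h) * (?h * gen_poly Z)"
      by (simp only: distrib_right mult.assoc add.commute)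
    finally show ?thesis
      by (simp only: gen_poly_nonzeros_mult)
  qed
  hence "p * gen_poly Z mod (monom 1 n - 1) = (p mod ?h) * gen_poly Z mod (monom 1 n - 1)"
    by simp
  ultimately show "c \<in> (\<lambda>p. coeff_vector (p * gen_poly Z)) ` message_polys"
    using p(2) message_mult_gen_poly_mod by (intro image_eqI[of _ _ "p mod ?h"]) simp_all
next
  fix c assume "c \<in> (\<lambda>p. coeff_vector (p * gen_poly Z)) ` message_polys"
  then obtain p where "p \<in> message_polys" "c = coeff_vector (p * gen_poly Z)"
    by blast
  thus "c \<in> cyclic_code q n Z"
    unfolding cyclic_code_altdef using message_mult_gen_poly_mod
    by (intro CollectI exI[of _ p]) (simp add: message_polys_def)
qed

lemma inj_on_encode: "inj_on (\<lambda>p. coeff_vector (p * gen_poly Z)) message_polys"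
proof (rule inj_onI)
  fix p p' assume p: "p \<in> message_polys" "p' \<in> message_polys"
    and eq: "coeff_vector (p * gen_poly Z) = coeff_vector (p' * gen_poly Z)"
  have "coeff (p * gen_poly Z) j = coeff (p' * gen_poly Z) j" for j
    using fun_cong[OF eq, of j] degree_message_mult_gen_poly[OF p(1)]
      degree_message_mult_gen_poly[OF p(2)]
    by (cases "j < n") (auto simp: coeff_vector_def coeff_eq_0)
  hence "p * gen_poly Z = p' * gen_poly Z"
    by (rule poly_eqI)
  thus "p = p'"
    using gen_poly_nonzero[of Z] by simp
qed

lemma card_cyclic_code: "card (cyclic_code q n Z) = q ^ (n - card Z)"
  using card_image[OF inj_on_encode] by (simp add: cyclic_code_eq_image_message_polys card_message_polys)

lemma finite_cyclic_code: "finite (cyclic_code q n Z)"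
  using card_cyclic_code q_ge_2 by (intro card_ge_0_finite) simp

lemma codeword_power_sum_eq_0:
  assumes c: "c \<in> cyclic_code q n Z" and b: "b \<in> Z"
  shows "(\<Sum>j<n. c j * b ^ j) = 0"
proof -
  obtain p where p: "c = coeff_vector (p * gen_poly Z mod (monom 1 n - 1))"
    using c by (auto simp: cyclic_code_altdef)
  have "b ^ n = 1"
    using b Z_subset_roots roots_power_n by auto
  hence "poly (p * gen_poly Z mod (monom 1 n - 1)) b = poly (p * gen_poly Z) b"
    by (intro poly_mod) (simp add: poly_monom)
  also have "\<dots> = 0"
    using poly_gen_poly_eq_0[OF finite_Z b] by simp
  finally show ?thesis
    by (simp add: p coeff_vector_def poly_eq_sum_lessThan[OF degree_mod_monom_n_minus_1])
qed

lemma bch_bound_cyclic_code: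
  assumes run: "\<And>t. t < D - 1 \<Longrightarrow> \<alpha> powi (b + int t) \<in> Z"
    and c: "c \<in> cyclic_code q n Z" "c \<noteq> (\<lambda>_. 0)"
  shows "D \<le> hweight n c"
proof -
  define y where "y j = c j * (\<alpha> powi b) ^ j" for j
  have "D \<le> card {j. j < n \<and> y j \<noteq> 0}"
  proof (rule bch_bound[OF inj_on_alpha_power])
    fix t assume "t < D - 1"
    hence "(\<Sum>j<n. c j * (\<alpha> powi (b + int t)) ^ j) = 0"
      using run c(1) codeword_power_sum_eq_0 by blast
    thus "(\<Sum>j<n. y j * (\<alpha> ^ j) ^ t) = 0"
      by (simp add: y_def alpha_powi_add power_mult_distrib mult.assoc flip: power_mult)
        (simp add: mult.commute)
  next
    obtain j where j: "c j \<noteq> 0"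
      using c(2) by auto
    hence "j < n"
      using codeword_beyond_n[OF c(1)] by (meson not_less)
    thus "\<exists>j<n. y j \<noteq> 0"
      using j alpha_nonzero by (auto simp: y_def)
  qed
  thus ?thesis
    using alpha_nonzero by (simp add: hweight_def y_def)
qed

lemma exists_nonzero_codeword_vanishing_on:
  assumes S: "finite S" "card S < n - card Z"
  obtains w where "w \<in> cyclic_code q n Z" "w \<noteq> (\<lambda>_. 0)" "\<And>j. j \<in> S \<Longrightarrow> w j = 0"
proof -
  have "\<not> inj_on (\<lambda>c. restrict c S) (cyclic_code q n Z)"
  proof
    assume "inj_on (\<lambda>c. restrict c S) (cyclic_code q n Z)"
    hence "card (cyclic_code q n Z) = card ((\<lambda>c. restrict c S) ` cyclic_code q n Z)"
      by (simp add: card_image)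
    also have "\<dots> \<le> card (\<Pi>\<^sub>E j\<in>S. (Fq q :: 'a set))"
      using codeword_in_Fq S(1) by (intro card_mono finite_PiE) auto
    also have "\<dots> < card (cyclic_code q n Z)"
      using S q_ge_2 by (simp add: card_PiE card_Fq card_cyclic_code power_strict_increasing)
    finally show False
      by simp
  qed
  then obtain c c' where c: "c \<in> cyclic_code q n Z" "c' \<in> cyclic_code q n Z" "c \<noteq> c'"
    and eq: "restrict c S = restrict c' S"
    unfolding inj_on_def by blast
  have "(\<lambda>j. c j + (- 1) * c' j) \<in> cyclic_code q n Z"
    by (rule codeword_add[OF c(1) codeword_smult[OF Fq_minus[OF Fq_1] c(2)]])
  moreover have "(\<lambda>j. c j + (- 1) * c' j) \<noteq> (\<lambda>_. 0)"
    using c(3) by (auto simp: fun_eq_iff)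
  moreover have "c j + (- 1) * c' j = 0" if "j \<in> S" for j
    using fun_cong[OF eq, of j] that by simp
  ultimately show ?thesis
    using that by blast
qed

end

section \<open>Locality from blocks of zeros\<close>

locale Fq2_cyclic_code_block_zeros = Fq2_cyclic_code +
  fixes \<nu> \<mu> :: nat and g :: int and \<delta> :: nat
  assumes n_eq: "n = \<nu> * \<mu>"
    and block_in_Z: "\<And>e t. e < \<nu> \<Longrightarrow> t < \<delta> - 1 \<Longrightarrow> \<alpha> powi (g + int e * int \<mu> + int t) \<in> Z"
begin

lemma nu_pos: "\<nu> > 0" and mu_pos: "\<mu> > 0"
  using n_pos n_eq by auto

lemma residue_index_lt_n:
  assumes "a < \<nu>" "s < \<mu>"
  shows "a + \<nu> * s < n"
proof -
  have "a + \<nu> * s < \<nu> * Suc s"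
    using assms by simp
  also have "\<dots> \<le> \<nu> * \<mu>"
    using assms by (intro mult_le_mono2) simp
  finally show ?thesis
    using n_eq by simp
qed

lemma inj_on_residue_index: "inj_on (\<lambda>s. a + \<nu> * s) A"
  using nu_pos by (auto simp: inj_on_def)

text \<open>At the zero \<open>\<alpha>^(g + t + e \<mu>)\<close> the part of a codeword on the class \<open>a mod \<nu>\<close> picks up
  the factor \<open>(\<alpha>^(\<mu> a))^e\<close>; these factors are distinct for \<open>a < \<nu>\<close>, so the Vandermonde
  argument separates the classes.\<close>

lemma residue_class_power_sums_eq_0:
  assumes w: "w \<in> cyclic_code q n Z" and t: "t < \<delta> - 1" and a: "a < \<nu>"
  shows "(\<Sum>s<\<mu>. w (a + \<nu> * s) * (\<alpha> powi (g + int t)) ^ (a + \<nu> * s)) = 0"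
proof -
  define X where "X a' = (\<Sum>s<\<mu>. w (a' + \<nu> * s) * (\<alpha> powi (g + int t)) ^ (a' + \<nu> * s))" for a'
  have sums: "(\<Sum>a'\<in>{..<\<nu>}. X a' * (\<alpha> ^ (\<mu> * a')) ^ e) = 0" if e: "e < card {..<\<nu>}" for e
  proof -
    have factor: "(\<alpha> ^ (\<mu> * e)) ^ (a' + \<nu> * s) = (\<alpha> ^ (\<mu> * a')) ^ e" for a' s
    proof -
      have "(\<alpha> ^ (\<mu> * e)) ^ (a' + \<nu> * s) = \<alpha> ^ (\<mu> * e * (a' + \<nu> * s))"
        by (rule power_mult[symmetric])
      also have "\<mu> * e * (a' + \<nu> * s) = \<mu> * a' * e + n * (e * s)"
        by (simp add: n_eq algebra_simps)
      also have "\<alpha> ^ (\<mu> * a' * e + n * (e * s)) = (\<alpha> ^ (\<mu> * a')) ^ e"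
        by (simp add: power_add power_mult alpha_power_n)
      finally show ?thesis .
    qed
    have "\<alpha> powi (g + int e * int \<mu> + int t) = \<alpha> powi (g + int t + int (\<mu> * e))"
      by (simp add: algebra_simps)
    also have "\<dots> = \<alpha> powi (g + int t) * \<alpha> ^ (\<mu> * e)"
      by (simp only: alpha_powi_add power_int_of_nat)
    finally have "\<alpha> powi (g + int e * int \<mu> + int t) = \<alpha> powi (g + int t) * \<alpha> ^ (\<mu> * e)" .
    hence "(\<Sum>j<n. w j * (\<alpha> powi (g + int e * int \<mu> + int t)) ^ j)
        = (\<Sum>a'<\<nu>. X a' * (\<alpha> ^ (\<mu> * a')) ^ e)"
      by (simp add: n_eq sum_lessThan_mult_residue_classes X_def sum_distrib_right
          power_mult_distrib factor mult.assoc)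
    thus ?thesis
      using codeword_power_sum_eq_0[OF w block_in_Z[OF _ t]] e by simp
  qed
  have inj: "inj_on (\<lambda>a'. \<alpha> ^ (\<mu> * a')) {..<\<nu>}"
  proof (rule inj_onI)
    fix a' a'' assume "a' \<in> {..<\<nu>}" "a'' \<in> {..<\<nu>}" "\<alpha> ^ (\<mu> * a') = \<alpha> ^ (\<mu> * a'')"
    moreover have "\<mu> * a' < n" "\<mu> * a'' < n" if "a' < \<nu>" "a'' < \<nu>"
      using that mu_pos n_eq by (simp_all add: mult.commute)
    ultimately show "a' = a''"
      using inj_on_alpha_power mu_pos by (auto dest: inj_onD)
  qed
  have "X a = 0"
    using a by (intro vandermonde_sums_eq_0_imp_eq_0[OF _ inj sums]) simp_all
  thus ?thesis
    by (simp add: X_def)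
qed

lemma residue_class_weight_ge:
  assumes w: "w \<in> cyclic_code q n Z" and a: "a < \<nu>" and nonzero: "\<exists>s<\<mu>. w (a + \<nu> * s) \<noteq> 0"
  shows "\<delta> \<le> card {s. s < \<mu> \<and> w (a + \<nu> * s) \<noteq> 0}"
proof -
  define y where "y s = w (a + \<nu> * s) * (\<alpha> powi g) ^ (a + \<nu> * s)" for s
  have "\<delta> \<le> card {s. s < \<mu> \<and> y s \<noteq> 0}"
  proof (rule bch_bound[where x = "\<lambda>s. \<alpha> ^ (\<nu> * s)"])
    show "inj_on (\<lambda>s. \<alpha> ^ (\<nu> * s)) {..<\<mu>}"
    proof (rule inj_onI)
      fix s s' assume "s \<in> {..<\<mu>}" "s' \<in> {..<\<mu>}" "\<alpha> ^ (\<nu> * s) = \<alpha> ^ (\<nu> * s')"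
      thus "s = s'"
        using inj_on_alpha_power residue_index_lt_n[OF nu_pos] nu_pos
        by (fastforce dest: inj_onD)
    qed
    fix t assume t: "t < \<delta> - 1"
    have "(\<alpha> powi (g + int t)) ^ (a + \<nu> * s) = (\<alpha> ^ t) ^ a * ((\<alpha> powi g) ^ (a + \<nu> * s) * (\<alpha> ^ (\<nu> * s)) ^ t)" for s
      by (simp add: alpha_powi_add power_mult_distrib power_add flip: power_mult) (simp add: mult_ac)
    hence "(\<alpha> ^ t) ^ a * (\<Sum>s<\<mu>. y s * (\<alpha> ^ (\<nu> * s)) ^ t) = 0"
      using residue_class_power_sums_eq_0[OF w t a] by (simp add: y_def sum_distrib_left mult_ac)
    thus "(\<Sum>s<\<mu>. y s * (\<alpha> ^ (\<nu> * s)) ^ t) = 0"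
      using alpha_nonzero by simp
  next
    show "\<exists>s<\<mu>. y s \<noteq> 0"
      using nonzero alpha_nonzero by (auto simp: y_def)
  qed
  thus ?thesis
    using alpha_nonzero by (simp add: y_def)
qed

lemma is_LRC_cyclic_code:
  assumes "\<mu> \<le> r + \<delta> - 1"
  shows "is_LRC n r \<delta> (cyclic_code q n Z)"
  unfolding is_LRC_def
proof (intro allI impI)
  fix i assume i: "i < n"
  define a where "a = i mod \<nu>"
  define S where "S = (\<lambda>s. a + \<nu> * s) ` {..<\<mu>}"
  have a: "a < \<nu>"
    using nu_pos by (simp add: a_def)
  show "\<exists>S. S \<subseteq> {..<n} \<and> i \<in> S \<and> card S \<le> r + \<delta> - 1 \<and>
      dist_at_least n (punctured S (cyclic_code q n Z)) \<delta>"
  proof (intro exI conjI)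
    show "S \<subseteq> {..<n}"
      using residue_index_lt_n[OF a] by (auto simp: S_def)
    show "i \<in> S"
      using i n_eq mu_pos unfolding S_def a_def
      by (intro image_eqI[where x = "i div \<nu>"]) (simp_all add: less_mult_imp_div_less mult.commute)
    show "card S \<le> r + \<delta> - 1"
      using assms card_image[OF inj_on_residue_index] by (simp add: S_def)
    show "dist_at_least n (punctured S (cyclic_code q n Z)) \<delta>"
      unfolding dist_at_least_def
    proof (intro ballI impI)
      fix c assume c: "c \<in> punctured S (cyclic_code q n Z)" "c \<noteq> (\<lambda>_. 0)"
      then obtain w where w: "w \<in> cyclic_code q n Z" "c = (\<lambda>j. if j \<in> S then w j else 0)"
        by (auto simp: punctured_def)
      have "\<exists>s<\<mu>. w (a + \<nu> * s) \<noteq> 0"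
        using c(2) w(2) by (auto simp: S_def fun_eq_iff split: if_splits)
      moreover have "{j. j < n \<and> c j \<noteq> 0} = (\<lambda>s. a + \<nu> * s) ` {s. s < \<mu> \<and> w (a + \<nu> * s) \<noteq> 0}"
        using residue_index_lt_n[OF a] by (auto simp: w S_def)
      ultimately show "\<delta> \<le> hweight n c"
        using residue_class_weight_ge[OF w(1) a] card_image[OF inj_on_residue_index]
        by (simp add: hweight_def)
    qed
  qed
qed

lemma residue_class_vanishes:
  assumes w: "w \<in> cyclic_code q n Z" and a: "a < \<nu>" and \<mu>: "\<mu> = r + \<delta> - 1" and \<delta>: "\<delta> \<ge> 1"
    and zeros: "\<And>s. s < r \<Longrightarrow> w (a + \<nu> * s) = 0" and s: "s < \<mu>"
  shows "w (a + \<nu> * s) = 0"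
proof (rule ccontr)
  assume "w (a + \<nu> * s) \<noteq> 0"
  hence "\<delta> \<le> card {s. s < \<mu> \<and> w (a + \<nu> * s) \<noteq> 0}"
    using residue_class_weight_ge[OF w a] s by blast
  also have "\<dots> \<le> card {r..<\<mu>}"
    using zeros by (intro card_mono) (auto simp: not_less[symmetric])
  also have "\<dots> = \<delta> - 1"
    using \<mu> \<delta> by simp
  finally show False
    using \<delta> by linarith
qed

lemma hweight_le_of_vanishing_classes:
  assumes T: "T < \<nu>" and p: "p \<le> \<mu>"
    and classes: "\<And>a s. a < T \<Longrightarrow> s < \<mu> \<Longrightarrow> w (a + \<nu> * s) = 0"
    and partial: "\<And>s. s < p \<Longrightarrow> w (T + \<nu> * s) = 0"
  shows "hweight n w \<le> n - (T * \<mu> + p)"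
proof -
  define pos where "pos = (\<lambda>(a, s). a + \<nu> * s)"
  have "{j. j < n \<and> w j \<noteq> 0} \<subseteq> pos ` ({T<..<\<nu>} \<times> {..<\<mu>} \<union> {T} \<times> {p..<\<mu>})"
  proof
    fix j assume j: "j \<in> {j. j < n \<and> w j \<noteq> 0}"
    have j_eq: "j = pos (j mod \<nu>, j div \<nu>)"
      by (simp add: pos_def)
    have "j mod \<nu> < \<nu>" "j div \<nu> < \<mu>"
      using j nu_pos n_eq by (simp_all add: less_mult_imp_div_less mult.commute)
    moreover have "\<not> j mod \<nu> < T"
      using j classes[of "j mod \<nu>" "j div \<nu>"] \<open>j div \<nu> < \<mu>\<close> by auto
    moreover have "\<not> (j mod \<nu> = T \<and> j div \<nu> < p)"
      using j partial[of "j div \<nu>"] by auto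
    ultimately show "j \<in> pos ` ({T<..<\<nu>} \<times> {..<\<mu>} \<union> {T} \<times> {p..<\<mu>})"
      using j_eq by (intro image_eqI[of _ _ "(j mod \<nu>, j div \<nu>)"]) auto
  qed
  hence "hweight n w \<le> card (pos ` ({T<..<\<nu>} \<times> {..<\<mu>} \<union> {T} \<times> {p..<\<mu>}))"
    unfolding hweight_def by (intro card_mono) auto
  also have "\<dots> \<le> card ({T<..<\<nu>} \<times> {..<\<mu>} \<union> {T} \<times> {p..<\<mu>})"
    by (rule card_image_le) simp
  also have "\<dots> = card ({T<..<\<nu>} \<times> {..<\<mu>}) + card ({T} \<times> {p..<\<mu>})"
    by (intro card_Un_disjoint) auto
  also have "\<dots> = n - (T * \<mu> + p)"
  proof -
    obtain d where "\<nu> = Suc (T + d)"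
      using less_imp_Suc_add[OF T] by blast
    thus ?thesis
      using p by (simp add: card_cartesian_product n_eq algebra_simps)
  qed
  finally show ?thesis .
qed

text \<open>By counting, some nonzero codeword vanishes on \<open>r\<close> coordinates of each of the first
  \<open>T\<close> residue classes and on \<open>p\<close> coordinates of class \<open>T\<close>; by locality it vanishes on the
  first \<open>T\<close> classes entirely.\<close>

lemma exists_codeword_weight_le:
  assumes k: "T * r + p < n - card Z" and T: "T < \<nu>" and p: "p \<le> \<mu>"
    and \<mu>: "\<mu> = r + \<delta> - 1" and \<delta>: "\<delta> \<ge> 1"
  obtains w where "w \<in> cyclic_code q n Z" "w \<noteq> (\<lambda>_. 0)" "hweight n w \<le> n - (T * \<mu> + p)"
proof -
  define I where "I = {..<T} \<times> {..<r} \<union> {T} \<times> {..<p}"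
  define S where "S = (\<lambda>(a, s). a + \<nu> * s) ` I"
  have "card S \<le> card I"
    unfolding S_def I_def by (rule card_image_le) simp
  also have "\<dots> = card ({..<T} \<times> {..<r}) + card ({T} \<times> {..<p})"
    unfolding I_def by (intro card_Un_disjoint) auto
  also have "\<dots> = T * r + p"
    by (simp add: card_cartesian_product)
  finally have "card S < n - card Z"
    using k by linarith
  moreover have "finite S"
    by (simp add: S_def I_def)
  ultimately obtain w where w: "w \<in> cyclic_code q n Z" "w \<noteq> (\<lambda>_. 0)"
    and wS: "\<And>j. j \<in> S \<Longrightarrow> w j = 0"
    using exists_nonzero_codeword_vanishing_on by blast
  have wI: "w (a + \<nu> * s) = 0" if "(a, s) \<in> I" for a s
    using that by (intro wS) (auto simp: S_def intro!: image_eqI[of _ _ "(a, s)"])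
  have "w (a + \<nu> * s) = 0" if "a < T" "s < \<mu>" for a s
  proof (rule residue_class_vanishes[OF w(1) _ \<mu> \<delta> _ that(2)])
    show "a < \<nu>"
      using that(1) T by simp
    show "w (a + \<nu> * s') = 0" if "s' < r" for s'
      using that \<open>a < T\<close> by (intro wI) (simp add: I_def)
  qed
  moreover have "w (T + \<nu> * s) = 0" if "s < p" for s
    using that wI by (simp add: I_def)
  ultimately have "hweight n w \<le> n - (T * \<mu> + p)"
    using T p by (intro hweight_le_of_vanishing_classes)
  thus ?thesis
    using that w by blast
qed

lemma min_dist_cyclic_code:
  assumes run: "\<And>t. t < D - 1 \<Longrightarrow> \<alpha> powi (b + int t) \<in> Z"
    and k: "T * r + p < n - card Z" and T: "T < \<nu>" and p: "p \<le> \<mu>"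
    and \<mu>: "\<mu> = r + \<delta> - 1" and \<delta>: "\<delta> \<ge> 1" and D: "D = n - (T * \<mu> + p)"
  shows "min_dist n (cyclic_code q n Z) = D"
  unfolding min_dist_def
proof (rule Min_eqI)
  show "finite (hweight n ` (cyclic_code q n Z - {\<lambda>_. 0}))"
    using finite_cyclic_code by simp
  show "D \<le> d" if "d \<in> hweight n ` (cyclic_code q n Z - {\<lambda>_. 0})" for d
    using that bch_bound_cyclic_code[OF run] by blast
  obtain w where w: "w \<in> cyclic_code q n Z" "w \<noteq> (\<lambda>_. 0)" "hweight n w \<le> D"
    using exists_codeword_weight_le[OF k T p \<mu> \<delta>] D by blast
  moreover have "D \<le> hweight n w"
    using bch_bound_cyclic_code[OF run w(1,2)] .
  ultimately show "D \<in> hweight n ` (cyclic_code q n Z - {\<lambda>_. 0})"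
    by (intro image_eqI[of _ _ w]) auto
qed

end

section \<open>Zeros made of a run and blocks\<close>

locale Fq2_LRC_parameters = Fq2_roots_of_unity +
  fixes r \<delta> :: nat and i m \<nu> :: int and B :: "'a set"
  assumes \<delta>_ge_2: "\<delta> \<ge> 2" and even_\<delta>: "even \<delta>" and dvd_n: "(r + \<delta> - 1) dvd n"
    and i_nonneg: "0 \<le> i" and i_le: "i \<le> (int r - 1) div 2"
    and m_def: "m = int (r + \<delta> - 1)" and \<nu>_def: "\<nu> = int (n div (r + \<delta> - 1))"
    and B_def: "B = {\<alpha> powi j | j. - ((int \<delta> - 2) div 2) \<le> j \<and> j \<le> (int \<delta> - 2) div 2}"
begin

definition \<beta> :: int where
  "\<beta> = (int \<delta> - 2) div 2"

lemma B_eq: "B = {\<alpha> powi j | j. - \<beta> \<le> j \<and> j \<le> \<beta>}"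
  by (simp add: B_def \<beta>_def)

lemma two_i_le: "2 * i \<le> int r - 1"
  using i_le by linarith

lemma m_pos: "m > 0"
  using \<delta>_ge_2 by (simp add: m_def)

lemma n_eq: "int n = \<nu> * m"
  using dvd_n by (simp add: m_def \<nu>_def flip: of_nat_mult)

lemma two_\<beta>: "2 * \<beta> + 1 = int \<delta> - 1" and \<beta>_nonneg: "0 \<le> \<beta>"
  using \<delta>_ge_2 even_\<delta> by (auto simp: \<beta>_def elim!: evenE)

lemma m_int: "m = int r + int \<delta> - 1"
  using \<delta>_ge_2 by (simp add: m_def)

lemma m_eq: "m = int r + 2 * \<beta> + 1"
  using two_\<beta> m_int by simp

lemma i_gap: "i + 2 * \<beta> < m"
  using m_eq two_i_le i_nonneg by linarith

end

locale run_and_blocks_zeros = Fq2_LRC_parameters +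
  fixes u c K :: int
  assumes K_ge_1: "1 \<le> K" and K_le: "K + 1 \<le> \<nu>"
    and run_symmetric: "int n dvd u + c + i"
    and blocks_symmetric: "int n dvd 2 * c + (K + 1) * m"
    and blocks_below_run: "u \<le> c + (K + 1 - \<nu>) * m"
    and run_length: "c + i - u = (\<nu> - K - 1) * m + 2 * i"
begin

lemma u_le_c: "u \<le> c"
proof -
  have "(K + 1 - \<nu>) * m \<le> 0"
    using K_le m_pos by (simp add: mult_nonpos_nonneg)
  thus ?thesis
    using blocks_below_run by linarith
qed

lemma span_lt_n: "c + K * m + \<beta> - (u - \<beta>) < int n"
proof -
  have "c + K * m + \<beta> - (u - \<beta>) = (\<nu> - 1) * m + i + 2 * \<beta>"
    using run_length by (simp add: algebra_simps)
  also have "\<dots> < \<nu> * m"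
    using i_gap by (simp add: algebra_simps)
  finally show ?thesis
    by (simp add: n_eq)
qed

definition A :: "'a set" where
  "A = {\<alpha> powi j | j. u \<le> j \<and> j \<le> c + i} \<union> {\<alpha> powi (c + e * m) | e. 1 \<le> e \<and> e \<le> K}"

definition run_exponents :: "int set" where
  "run_exponents = {u - \<beta>..c + i + \<beta>}"

definition block_exponents :: "int set" where
  "block_exponents = (\<lambda>(e, b). c + e * m + b) ` ({1..K} \<times> {- \<beta>..\<beta>})"

lemma block_exponentsE:
  assumes "j \<in> block_exponents"
  obtains e b where "j = c + e * m + b" "1 \<le> e" "e \<le> K" "- \<beta> \<le> b" "b \<le> \<beta>"
  using assms by (auto simp: block_exponents_def)

lemma setmult_A_B: "setmult A B = (\<lambda>j. \<alpha> powi j) ` (run_exponents \<union> block_exponents)"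
proof (intro equalityI subsetI)
  fix x assume "x \<in> setmult A B"
  then obtain a b where x: "x = \<alpha> powi a * \<alpha> powi b" and b: "- \<beta> \<le> b" "b \<le> \<beta>"
    and a: "u \<le> a \<and> a \<le> c + i \<or> (\<exists>e. a = c + e * m \<and> 1 \<le> e \<and> e \<le> K)"
    unfolding setmult_def A_def B_eq by blast
  from a have "a + b \<in> run_exponents \<union> block_exponents"
  proof
    assume "\<exists>e. a = c + e * m \<and> 1 \<le> e \<and> e \<le> K"
    then obtain e where "a = c + e * m" "1 \<le> e" "e \<le> K"
      by blast
    thus ?thesis
      using b by (auto simp: block_exponents_def intro!: image_eqI[of _ _ "(e, b)"])
  qed (use b in \<open>auto simp: run_exponents_def\<close>)
  thus "x \<in> (\<lambda>j. \<alpha> powi j) ` (run_exponents \<union> block_exponents)"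
    using x by (intro image_eqI[of _ _ "a + b"]) (simp_all add: alpha_powi_add)
next
  fix x assume "x \<in> (\<lambda>j. \<alpha> powi j) ` (run_exponents \<union> block_exponents)"
  then obtain j where x: "x = \<alpha> powi j" and j: "j \<in> run_exponents \<union> block_exponents"
    by blast
  have product: "\<alpha> powi a * \<alpha> powi b \<in> setmult A B"
    if "u \<le> a \<and> a \<le> c + i \<or> (\<exists>e. a = c + e * m \<and> 1 \<le> e \<and> e \<le> K)" "- \<beta> \<le> b" "b \<le> \<beta>" for a b
    unfolding setmult_def A_def B_eq using that by blast
  from j show "x \<in> setmult A B"
  proof
    assume "j \<in> run_exponents"
    define b where "b = (if j < u then j - u else if j > c + i then j - (c + i) else 0)"
    have "- \<beta> \<le> b" "b \<le> \<beta>" "u \<le> j - b" "j - b \<le> c + i"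
      using \<open>j \<in> run_exponents\<close> u_le_c i_nonneg \<beta>_nonneg by (auto simp: b_def run_exponents_def)
    thus ?thesis
      using product[of "j - b" b] by (simp add: x flip: alpha_powi_add)
  next
    assume "j \<in> block_exponents"
    then obtain e b where "j = c + e * m + b" "1 \<le> e" "e \<le> K" "- \<beta> \<le> b" "b \<le> \<beta>"
      by (rule block_exponentsE)
    thus ?thesis
      using product[of "c + e * m" b] by (auto simp: x alpha_powi_add)
  qed
qed

lemma exponent_bounds:
  assumes "j \<in> run_exponents \<union> block_exponents"
  shows "u - \<beta> \<le> j \<and> j \<le> c + K * m + \<beta>"
  using assms
proof
  assume "j \<in> block_exponents"
  then obtain e b where eb: "j = c + e * m + b" "1 \<le> e" "e \<le> K" "- \<beta> \<le> b" "b \<le> \<beta>"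
    by (rule block_exponentsE)
  have "e * m \<le> K * m" "1 * m \<le> e * m"
    using eb m_pos by (simp_all only: mult_right_mono less_imp_le)
  thus ?thesis
    using eb u_le_c \<beta>_nonneg m_pos by linarith
next
  assume "j \<in> run_exponents"
  moreover have "1 * m \<le> K * m"
    using K_ge_1 m_pos by (intro mult_right_mono) simp_all
  ultimately show ?thesis
    using i_gap \<beta>_nonneg unfolding run_exponents_def atLeastAtMost_iff by linarith
qed

lemma inj_on_exponents: "inj_on (\<lambda>j. \<alpha> powi j) (run_exponents \<union> block_exponents)"
proof (rule inj_onI)
  fix j j' assume j: "j \<in> run_exponents \<union> block_exponents" "j' \<in> run_exponents \<union> block_exponents"
    and "\<alpha> powi j = \<alpha> powi j'"
  hence "int n dvd j - j'"
    by (simp add: alpha_powi_eq_iff mod_eq_dvd_iff)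
  moreover have "\<bar>j - j'\<bar> < int n"
    using exponent_bounds[OF j(1)] exponent_bounds[OF j(2)] span_lt_n by linarith
  ultimately show "j = j'"
    using dvd_imp_le_int[of "j - j'" "int n"] by fastforce
qed

lemma card_block_exponents: "card block_exponents = nat K * nat (2 * \<beta> + 1)"
proof -
  have "inj_on (\<lambda>(e, b). c + e * m + b) ({1..K} \<times> {- \<beta>..\<beta>})"
  proof (rule inj_onI)
    fix x x' assume mem: "x \<in> {1..K} \<times> {- \<beta>..\<beta>}" "x' \<in> {1..K} \<times> {- \<beta>..\<beta>}"
      and "(\<lambda>(e, b). c + e * m + b) x = (\<lambda>(e, b). c + e * m + b) x'"
    moreover obtain e b e' b' where x: "x = (e, b)" "x' = (e', b')"
      by (cases x, cases x')
    ultimately have eq: "c + e * m + b = c + e' * m + b'"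
      by simp
    from mem x have "- \<beta> \<le> b" "b \<le> \<beta>" "- \<beta> \<le> b'" "b' \<le> \<beta>"
      by simp_all
    hence "\<bar>b' - b\<bar> < m"
      using i_gap i_nonneg unfolding abs_less_iff by linarith
    moreover have "(e - e') * m = b' - b"
      using eq by (simp add: algebra_simps)
    ultimately have "\<bar>(e - e') * m\<bar> < m"
      by simp
    hence "\<bar>e - e'\<bar> * m < 1 * m"
      using m_pos by (simp only: abs_mult abs_of_pos mult_1)
    hence "\<bar>e - e'\<bar> < 1"
      by (rule mult_right_less_imp_less) (use m_pos in simp)
    thus "x = x'"
      using eq x by simp
  qed
  thus ?thesis
    by (simp add: block_exponents_def card_image card_cartesian_product)
qed

lemma card_setmult_A_B: "int (card (setmult A B)) = (c + i - u + 2 * \<beta> + 1) + K * (2 * \<beta> + 1)"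
proof -
  have "run_exponents \<inter> block_exponents = {}"
  proof -
    have "j \<notin> run_exponents" if "j \<in> block_exponents" for j
    proof -
      obtain e b where "j = c + e * m + b" "1 \<le> e" "e \<le> K" "- \<beta> \<le> b" "b \<le> \<beta>"
        using \<open>j \<in> block_exponents\<close> by (rule block_exponentsE)
      moreover have "1 * m \<le> e * m"
        using \<open>1 \<le> e\<close> m_pos by (intro mult_right_mono) simp_all
      ultimately show ?thesis
        using i_gap unfolding run_exponents_def atLeastAtMost_iff by linarith
    qed
    thus ?thesis
      by blast
  qed
  hence "card (setmult A B) = card run_exponents + card block_exponents"
    unfolding setmult_A_B card_image[OF inj_on_exponents]
    by (intro card_Un_disjoint) (simp_all add: run_exponents_def block_exponents_def)
  moreover have "card run_exponents = nat (c + i - u + 2 * \<beta> + 1)"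
    by (simp add: run_exponents_def algebra_simps)
  ultimately show ?thesis
    using u_le_c i_nonneg \<beta>_nonneg K_ge_1 by (simp add: card_block_exponents)
qed

lemma setmult_A_B_subset_roots: "setmult A B \<subseteq> roots"
  by (auto simp: setmult_A_B roots_eq_range)

text \<open>The two symmetry hypotheses say that negation modulo \<open>n\<close> maps the run and the family
  of blocks onto themselves.\<close>

lemma inverse_in_setmult_A_B:
  assumes "x \<in> setmult A B"
  shows "inverse x \<in> setmult A B"
proof -
  obtain j where j: "x = \<alpha> powi j" "j \<in> run_exponents \<union> block_exponents"
    using assms by (auto simp: setmult_A_B)
  have inverse: "inverse x = \<alpha> powi (- j + int n * k)" for k
    using j(1) alpha_powi_add[of "- j" "int n * k"] by (simp add: alpha_powi_n_mult power_int_minus)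
  from j(2) show ?thesis
  proof
    assume "j \<in> run_exponents"
    obtain k where "u + c + i = int n * k"
      using run_symmetric by (elim dvdE) blast
    moreover have "- j + (u + c + i) \<in> run_exponents"
      using \<open>j \<in> run_exponents\<close> by (auto simp: run_exponents_def)
    ultimately show ?thesis
      using inverse[of k] by (auto simp: setmult_A_B)
  next
    assume "j \<in> block_exponents"
    then obtain e b where eb: "j = c + e * m + b" "1 \<le> e" "e \<le> K" "- \<beta> \<le> b" "b \<le> \<beta>"
      by (auto simp: block_exponents_def)
    obtain k where "2 * c + (K + 1) * m = int n * k"
      using blocks_symmetric by (elim dvdE) blast
    moreover have "- j + (2 * c + (K + 1) * m) = c + (K + 1 - e) * m + (- b)"
      using eb by (simp add: algebra_simps)
    moreover have "c + (K + 1 - e) * m + (- b) \<in> block_exponents"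
      using eb by (auto simp: block_exponents_def intro!: image_eqI[of _ _ "(K + 1 - e, - b)"])
    ultimately show ?thesis
      using inverse[of k] by (auto simp: setmult_A_B)
  qed
qed

lemma run_in_setmult_A_B:
  "t < nat (c + i - u + 2 * \<beta> + 1) \<Longrightarrow> \<alpha> powi (u - \<beta> + int t) \<in> setmult A B"
  by (auto simp: setmult_A_B run_exponents_def)

text \<open>The blocks \<open>c + e m + [-\<beta>, \<beta>]\<close> for \<open>K + 1 - \<nu> \<le> e \<le> 0\<close> lie in the run, those for
  \<open>1 \<le> e \<le> K\<close> are the block exponents: together \<open>\<nu>\<close> blocks of \<open>\<delta> - 1\<close> consecutive
  exponents, spaced \<open>m\<close> apart.\<close>

lemma block_in_setmult_A_B:
  assumes e: "e < n div (r + \<delta> - 1)" and t: "t < \<delta> - 1"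
  shows "\<alpha> powi ((c + (K + 1 - \<nu>) * m - \<beta>) + int e * m + int t) \<in> setmult A B"
proof -
  define e' where "e' = int e + K + 1 - \<nu>"
  define b where "b = int t - \<beta>"
  have eq: "(c + (K + 1 - \<nu>) * m - \<beta>) + int e * m + int t = c + e' * m + b"
    by (simp add: e'_def b_def algebra_simps)
  have b: "- \<beta> \<le> b" "b \<le> \<beta>"
    using t two_\<beta> by (auto simp: b_def)
  have "c + e' * m + b \<in> run_exponents \<union> block_exponents"
  proof (cases "1 \<le> e'")
    case True
    moreover have "e' \<le> K"
      using e by (simp add: e'_def \<nu>_def)
    ultimately show ?thesis
      using b by (auto simp: block_exponents_def intro!: image_eqI[of _ _ "(e', b)"])
  next
    case False
    hence "e' * m \<le> 0"
      using m_pos by (simp add: mult_nonpos_nonneg)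
    moreover have "(K + 1 - \<nu>) * m \<le> e' * m"
      using m_pos by (intro mult_right_mono) (auto simp: e'_def)
    ultimately show ?thesis
      using b blocks_below_run i_nonneg by (auto simp: run_exponents_def)
  qed
  thus ?thesis
    unfolding eq setmult_A_B by blast
qed

sublocale C: Fq2_cyclic_code_block_zeros q n \<alpha> "setmult A B" "n div (r + \<delta> - 1)" "r + \<delta> - 1"
  "c + (K + 1 - \<nu>) * m - \<beta>" \<delta>
proof unfold_locales
  show "setmult A B \<subseteq> roots" "\<And>x. x \<in> setmult A B \<Longrightarrow> inverse x \<in> setmult A B"
    by (simp_all add: setmult_A_B_subset_roots inverse_in_setmult_A_B)
  show "n = n div (r + \<delta> - 1) * (r + \<delta> - 1)"
    using dvd_n by simp
  show "\<alpha> powi (c + (K + 1 - \<nu>) * m - \<beta> + int e * int (r + \<delta> - 1) + int t) \<in> setmult A B"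
    if "e < n div (r + \<delta> - 1)" "t < \<delta> - 1" for e t
    using block_in_setmult_A_B[OF that] by (simp add: m_def)
qed

lemma dimension_setmult_A_B: "n - card (setmult A B) = nat ((K + 1) * int r - 2 * i)"
proof -
  have card_Z: "int (card (setmult A B)) = (\<nu> - K - 1) * m + 2 * i + (K + 1) * (2 * \<beta> + 1)"
    using card_setmult_A_B run_length by (simp add: algebra_simps)
  have "int (n - card (setmult A B)) = int n - int (card (setmult A B))"
    using C.card_Z_le by simp
  also have "\<dots> = \<nu> * m - ((\<nu> - K - 1) * m + 2 * i + (K + 1) * (2 * \<beta> + 1))"
    by (simp only: card_Z n_eq)
  also have "\<dots> = (K + 1) * (m - (2 * \<beta> + 1)) - 2 * i"
    by (simp add: algebra_simps)
  also have "\<dots> = (K + 1) * int r - 2 * i"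
    by (simp add: m_eq)
  finally show ?thesis
    by simp
qed

lemma int_nat_dimension: "int (nat ((K + 1) * int r - 2 * i)) = (K + 1) * int r - 2 * i"
proof -
  have "(K + 1) * int r \<ge> 2 * int r"
    using K_ge_1 by (intro mult_right_mono) simp_all
  thus ?thesis
    using two_i_le by simp
qed

lemma int_nat_distance: "int (nat (int \<delta> + 2 * i + (\<nu> - K - 1) * m)) = int \<delta> + 2 * i + (\<nu> - K - 1) * m"
  using K_le m_pos i_nonneg by simp

lemma distance_eq_n_minus:
  "nat (int \<delta> + 2 * i + (\<nu> - K - 1) * m) = n - (nat K * (r + \<delta> - 1) + nat (int r - 2 * i - 1))"
proof -
  have X: "int (nat K * (r + \<delta> - 1) + nat (int r - 2 * i - 1)) = K * m + int r - 2 * i - 1"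
    using K_ge_1 two_i_le by (simp add: m_def)
  have "(K + 1) * m \<le> \<nu> * m"
    using K_le m_pos by (intro mult_right_mono) simp_all
  hence "K * m + m \<le> int n"
    using n_eq by (simp add: algebra_simps)
  hence "K * m + int r - 2 * i - 1 \<le> int n"
    using m_int i_nonneg \<delta>_ge_2 by linarith
  hence "int (nat K * (r + \<delta> - 1) + nat (int r - 2 * i - 1)) \<le> int n"
    by (simp only: X)
  hence "nat K * (r + \<delta> - 1) + nat (int r - 2 * i - 1) \<le> n"
    by (simp only: of_nat_le_iff)
  hence "int (n - (nat K * (r + \<delta> - 1) + nat (int r - 2 * i - 1)))
      = int n - int (nat K * (r + \<delta> - 1) + nat (int r - 2 * i - 1))"
    by (rule of_nat_diff)
  also have "\<dots> = int n - (K * m + int r - 2 * i - 1)"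
    by (simp only: X)
  also have "\<dots> = int (nat (int \<delta> + 2 * i + (\<nu> - K - 1) * m))"
  proof -
    have "(\<nu> - K - 1) * m = \<nu> * m - K * m - m"
      by (simp add: algebra_simps)
    thus ?thesis
      using int_nat_distance n_eq m_int by linarith
  qed
  finally show ?thesis
    by (simp only: of_nat_eq_iff)
qed

lemma min_dist_setmult_A_B:
  "min_dist n (cyclic_code q n (setmult A B)) = nat (int \<delta> + 2 * i + (\<nu> - K - 1) * m)"
proof (rule C.min_dist_cyclic_code[where b = "u - \<beta>" and T = "nat K" and p = "nat (int r - 2 * i - 1)"])
  show "\<alpha> powi (u - \<beta> + int t) \<in> setmult A B"
    if "t < nat (int \<delta> + 2 * i + (\<nu> - K - 1) * m) - 1" for t
    using that int_nat_distance run_length two_\<beta> by (intro run_in_setmult_A_B) (simp add: algebra_simps)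
  have "int (nat K * r + nat (int r - 2 * i - 1)) < int (nat ((K + 1) * int r - 2 * i))"
    using K_ge_1 two_i_le by (simp add: int_nat_dimension algebra_simps)
  thus "nat K * r + nat (int r - 2 * i - 1) < n - card (setmult A B)"
    unfolding dimension_setmult_A_B by linarith
  show "nat K < n div (r + \<delta> - 1)"
    using K_le K_ge_1 by (simp add: \<nu>_def nat_less_iff)
  show "nat (int r - 2 * i - 1) \<le> r + \<delta> - 1"
    using \<delta>_ge_2 i_nonneg by (simp add: nat_le_iff)
  show "r + \<delta> - 1 = r + \<delta> - 1" "\<delta> \<ge> 1"
    using \<delta>_ge_2 by simp_all
  show "nat (int \<delta> + 2 * i + (\<nu> - K - 1) * m)
      = n - (nat K * (r + \<delta> - 1) + nat (int r - 2 * i - 1))"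
    by (rule distance_eq_n_minus)
qed

theorem optimal_LRC_setmult_A_B:
  "optimal_LRC q n r \<delta> (cyclic_code q n (setmult A B))
     (nat ((K + 1) * int r - 2 * i)) (nat (int \<delta> + 2 * i + (\<nu> - K - 1) * m))"
proof -
  have "\<lceil>real (nat ((K + 1) * int r - 2 * i)) / real r\<rceil> = K + 1"
    using int_nat_dimension i_nonneg two_i_le by (intro ceiling_divide_eq[where s = "2 * i"]) simp_all
  hence bound: "int (nat (int \<delta> + 2 * i + (\<nu> - K - 1) * m))
      = int n - int (nat ((K + 1) * int r - 2 * i))
        - (\<lceil>real (nat ((K + 1) * int r - 2 * i)) / real r\<rceil> - 1) * (int \<delta> - 1) + 1"
    unfolding int_nat_dimension int_nat_distance n_eq by (simp add: m_int algebra_simps)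
  show ?thesis
    unfolding optimal_LRC_def code_dim_def
    using C.linear_code_Fq_cyclic_code C.card_cyclic_code C.is_LRC_cyclic_code[of r]
      dimension_setmult_A_B min_dist_setmult_A_B bound
    by simp
qed

end

section \<open>The three families of defining sets\<close>

context Fq2_LRC_parameters
begin

lemma optimal_LRC_centered_run:
  assumes l: "0 \<le> l" "l \<le> (\<nu> - 2) div 2"
  shows "optimal_LRC q n r \<delta>
    (cyclic_code q n (setmult ({\<alpha> powi j | j. \<bar>j\<bar> \<le> l * m + i}
       \<union> {\<alpha> powi ((l + e) * m) | e. 1 \<le> e \<and> e \<le> \<nu> - 2 * l - 1}) B))
    (nat ((\<nu> - 2 * l) * int r - 2 * i)) (nat (int \<delta> + 2 * i + 2 * l * m))"
proof -
  interpret S: run_and_blocks_zeros q n \<alpha> r \<delta> i m \<nu> B "- (l * m + i)" "l * m" "\<nu> - 2 * l - 1"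
  proof unfold_locales
    show "1 \<le> \<nu> - 2 * l - 1" "\<nu> - 2 * l - 1 + 1 \<le> \<nu>"
      using l by presburger+
    show "int n dvd - (l * m + i) + l * m + i"
      by simp
    show "int n dvd 2 * (l * m) + (\<nu> - 2 * l - 1 + 1) * m"
      using n_eq by (simp add: algebra_simps)
    show "- (l * m + i) \<le> l * m + (\<nu> - 2 * l - 1 + 1 - \<nu>) * m"
      using i_nonneg by (simp add: algebra_simps)
    show "l * m + i - - (l * m + i) = (\<nu> - (\<nu> - 2 * l - 1) - 1) * m + 2 * i"
      by (simp add: algebra_simps)
  qed
  have "S.A = {\<alpha> powi j | j. \<bar>j\<bar> \<le> l * m + i}
      \<union> {\<alpha> powi ((l + e) * m) | e. 1 \<le> e \<and> e \<le> \<nu> - 2 * l - 1}"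
    unfolding S.A_def by (auto simp: abs_le_iff algebra_simps)
  thus ?thesis
    using S.optimal_LRC_setmult_A_B by simp
qed

lemma optimal_LRC_centered_run_even_m:
  assumes m: "even m" and l: "0 \<le> l" "l \<le> (\<nu> - 3) div 2"
  shows "optimal_LRC q n r \<delta>
    (cyclic_code q n (setmult ({\<alpha> powi j | j. \<bar>j\<bar> \<le> (2 * l + 1) * (m div 2) + i}
       \<union> {\<alpha> powi ((2 * l + 1 + 2 * e) * (m div 2)) | e. 1 \<le> e \<and> e \<le> \<nu> - 2 * l - 2}) B))
    (nat ((\<nu> - 2 * l - 1) * int r - 2 * i)) (nat (int \<delta> + 2 * i + (2 * l + 1) * m))"
proof -
  obtain h where h: "m = 2 * h"
    using m by (elim evenE)
  interpret S: run_and_blocks_zeros q n \<alpha> r \<delta> i m \<nu> B "- ((2 * l + 1) * h + i)" "(2 * l + 1) * h"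
    "\<nu> - 2 * l - 2"
  proof unfold_locales
    show "1 \<le> \<nu> - 2 * l - 2" "\<nu> - 2 * l - 2 + 1 \<le> \<nu>"
      using l by presburger+
    show "int n dvd - ((2 * l + 1) * h + i) + (2 * l + 1) * h + i"
      by simp
    show "int n dvd 2 * ((2 * l + 1) * h) + (\<nu> - 2 * l - 2 + 1) * m"
      using n_eq h by (simp add: algebra_simps)
    show "- ((2 * l + 1) * h + i) \<le> (2 * l + 1) * h + (\<nu> - 2 * l - 2 + 1 - \<nu>) * m"
      using i_nonneg h by (simp add: algebra_simps)
    show "(2 * l + 1) * h + i - - ((2 * l + 1) * h + i) = (\<nu> - (\<nu> - 2 * l - 2) - 1) * m + 2 * i"
      using h by (simp add: algebra_simps)
  qed
  have "S.A = {\<alpha> powi j | j. \<bar>j\<bar> \<le> (2 * l + 1) * (m div 2) + i}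
      \<union> {\<alpha> powi ((2 * l + 1 + 2 * e) * (m div 2)) | e. 1 \<le> e \<and> e \<le> \<nu> - 2 * l - 2}"
    unfolding S.A_def using h by (auto simp: abs_le_iff algebra_simps)
  moreover have "\<nu> - 2 * l - 2 + 1 = \<nu> - 2 * l - 1" "\<nu> - (\<nu> - 2 * l - 2) - 1 = 2 * l + 1"
    by simp_all
  ultimately show ?thesis
    using S.optimal_LRC_setmult_A_B by (simp only:)
qed

lemma optimal_LRC_shifted_run_odd_\<nu>:
  assumes \<nu>: "odd \<nu>" and l: "1 \<le> l" "l \<le> (\<nu> - 3) div 2"
  shows "optimal_LRC q n r \<delta>
    (cyclic_code q n (setmult ({\<alpha> powi j | j. ((\<nu> - 1) div 2 - l) * m - i \<le> j \<and>
                                             j \<le> ((\<nu> + 1) div 2 + l) * m + i}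
       \<union> {\<alpha> powi (((\<nu> + 1) div 2 + l + e) * m) | e. 1 \<le> e \<and> e \<le> \<nu> - 2 * l - 2}) B))
    (nat ((\<nu> - 2 * l - 1) * int r - 2 * i)) (nat (int \<delta> + 2 * i + (2 * l + 1) * m))"
proof -
  obtain p where p: "\<nu> = 2 * p + 1"
    using \<nu> by (elim oddE)
  hence half: "(\<nu> - 1) div 2 = p" "(\<nu> + 1) div 2 = p + 1"
    by simp_all
  interpret S: run_and_blocks_zeros q n \<alpha> r \<delta> i m \<nu> B "((\<nu> - 1) div 2 - l) * m - i"
    "((\<nu> + 1) div 2 + l) * m" "\<nu> - 2 * l - 2"
  proof unfold_locales
    show "1 \<le> \<nu> - 2 * l - 2" "\<nu> - 2 * l - 2 + 1 \<le> \<nu>"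
      using l by presburger+
    have "((\<nu> - 1) div 2 - l) * m - i + ((\<nu> + 1) div 2 + l) * m + i = int n"
      using n_eq p by (simp add: half algebra_simps)
    thus "int n dvd ((\<nu> - 1) div 2 - l) * m - i + ((\<nu> + 1) div 2 + l) * m + i"
      by simp
    have "2 * (((\<nu> + 1) div 2 + l) * m) + (\<nu> - 2 * l - 2 + 1) * m = 2 * int n"
      using n_eq p by (simp add: half algebra_simps)
    thus "int n dvd 2 * (((\<nu> + 1) div 2 + l) * m) + (\<nu> - 2 * l - 2 + 1) * m"
      by simp
    show "((\<nu> - 1) div 2 - l) * m - i \<le> ((\<nu> + 1) div 2 + l) * m + (\<nu> - 2 * l - 2 + 1 - \<nu>) * m"
      unfolding half using i_nonneg by (simp add: algebra_simps)
    show "((\<nu> + 1) div 2 + l) * m + i - (((\<nu> - 1) div 2 - l) * m - i)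
        = (\<nu> - (\<nu> - 2 * l - 2) - 1) * m + 2 * i"
      using p by (simp add: half algebra_simps)
  qed
  have "S.A = {\<alpha> powi j | j. ((\<nu> - 1) div 2 - l) * m - i \<le> j \<and> j \<le> ((\<nu> + 1) div 2 + l) * m + i}
      \<union> {\<alpha> powi (((\<nu> + 1) div 2 + l + e) * m) | e. 1 \<le> e \<and> e \<le> \<nu> - 2 * l - 2}"
    unfolding S.A_def by (auto simp: algebra_simps)
  moreover have "\<nu> - 2 * l - 2 + 1 = \<nu> - 2 * l - 1" "\<nu> - (\<nu> - 2 * l - 2) - 1 = 2 * l + 1"
    by simp_all
  ultimately show ?thesis
    using S.optimal_LRC_setmult_A_B by (simp only:)
qed

end

theorem corollary5p2:
  fixes q n r \<delta> :: nat and \<alpha> :: "'a::{field,finite}" and i :: int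
  assumes q: "prime_power q" and card: "card (UNIV :: 'a set) = q ^ 2"
    and ndvd: "n dvd q + 1"
    and prim: "\<alpha> ^ n = 1" "\<forall>k. 0 < k \<and> k < n \<longrightarrow> \<alpha> ^ k \<noteq> 1"
    and r: "r \<ge> 1" and \<delta>: "\<delta> \<ge> 2" "even \<delta>"
    and div: "(r + \<delta> - 1) dvd n"
    and i: "0 \<le> i" "i \<le> (int r - 1) div 2"
  defines "m \<equiv> int (r + \<delta> - 1)"
    and "\<nu> \<equiv> int (n div (r + \<delta> - 1))"
    and "B \<equiv> {\<alpha> powi j | j. - ((int \<delta> - 2) div 2) \<le> j \<and> j \<le> (int \<delta> - 2) div 2}"
  shows
    "(\<forall>l::int. 0 \<le> l \<and> l \<le> (\<nu> - 2) div 2 \<longrightarrow>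
       (let A = {\<alpha> powi j | j. \<bar>j\<bar> \<le> l * m + i}
              \<union> {\<alpha> powi ((l + e) * m) | e. 1 \<le> e \<and> e \<le> \<nu> - 2 * l - 1}
        in optimal_LRC q n r \<delta> (cyclic_code q n (setmult A B))
             (nat ((\<nu> - 2 * l) * int r - 2 * i))
             (nat (int \<delta> + 2 * i + 2 * l * m))))
   \<and> (even m \<longrightarrow>
      (\<forall>l::int. 0 \<le> l \<and> l \<le> (\<nu> - 3) div 2 \<longrightarrow>
       (let A = {\<alpha> powi j | j. \<bar>j\<bar> \<le> (2 * l + 1) * (m div 2) + i}
              \<union> {\<alpha> powi ((2 * l + 1 + 2 * e) * (m div 2)) | e. 1 \<le> e \<and> e \<le> \<nu> - 2 * l - 2}
        in optimal_LRC q n r \<delta> (cyclic_code q n (setmult A B))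
             (nat ((\<nu> - 2 * l - 1) * int r - 2 * i))
             (nat (int \<delta> + 2 * i + (2 * l + 1) * m)))))
   \<and> (odd \<nu> \<longrightarrow>
      (\<forall>l::int. 1 \<le> l \<and> l \<le> (\<nu> - 3) div 2 \<longrightarrow>
       (let A = {\<alpha> powi j | j. ((\<nu> - 1) div 2 - l) * m - i \<le> j \<and>
                                 j \<le> ((\<nu> + 1) div 2 + l) * m + i}
              \<union> {\<alpha> powi (((\<nu> + 1) div 2 + l + e) * m) | e. 1 \<le> e \<and> e \<le> \<nu> - 2 * l - 2}
        in optimal_LRC q n r \<delta> (cyclic_code q n (setmult A B))
             (nat ((\<nu> - 2 * l - 1) * int r - 2 * i))
             (nat (int \<delta> + 2 * i + (2 * l + 1) * m)))))"
proof -
  interpret P: Fq2_LRC_parameters q n \<alpha> r \<delta> i m \<nu> B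
    using q card ndvd prim \<delta> div i by unfold_locales (simp_all add: m_def \<nu>_def B_def)
  show ?thesis
    unfolding Let_def
    using P.optimal_LRC_centered_run P.optimal_LRC_centered_run_even_m
      P.optimal_LRC_shifted_run_odd_\<nu>
    by blast
qed

end
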